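(* Assume all $\lambda_k>0$ and $\mu_k>0$. Let $\mu_{\min}=\min_k\mu_k$, $\mu_{\max}=\max_k\mu_k$, $r_\mu=\mu_{\max}/\mu_{\min}$, let $\mu^{\min}$ (resp. $\mu^{\max}$) be the vector with all entries equal to $\mu_{\min}$ (resp. $\mu_{\max}$), and let $C_{m,n}=\{m'\in\mathbb{Z}_+^K: m'_k\ge m_k\ \forall k,\ \sum_km'_k=\sum_km_k+n\}$. Let $\bar X$ be stationary for the two-layer loss system with parameters $(m,n,\lambda,\mu)$, $\bar X(m',0,\lambda,\mu^{\max})$ stationary for the system with parameters $(m',0,\lambda,\mu^{\max})$, and $\bar X^{\mathrm{mp}}(m,n,\lambda,\mu^{\min})$ stationary for the maximum packing system with parameters $(m,n,\lambda,\mu^{\min})$. Then for every $m'\in C_{m,n}$, $|\bar X(m',0,\lambda,\mu^{\max})|\le_{\mathrm{st}}|\bar X|\le_{\mathrm{st}}|\bar X^{\mathrm{mp}}(m,n,\lambda,\mu^{\min})|$. Consequently, writing $a=\mathbb{E}|\bar X|$, $\theta$ for the mean throughput and $b$ for the overall blocking probability (with corresponding quantities for the other systems indicated by their parameters and superscript mp): $\max_{m'\in C_{m,n}}a(m',0,\lambda,\mu^{\max})\le a\le a^{\mathrm{mp}}(m,n,\lambda,\mu^{\min})$; $\max_{m'\in C_{m,n}}r_\mu^{-1}\theta(m',0,\lambda,\mu^{\max})\le\theta\le r_\mu\,\theta^{\mathrm{mp}}(m,n,\lambda,\mu^{\min})$; $1-r_\mu\big(1-b^{\mathrm{mp}}(m,n,\lambda,\mu^{\min})\big)\le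 b\le\min_{m'\in C_{m,n}}\big(1-r_\mu^{-1}(1-b(m',0,\lambda,\mu^{\max}))\big)$.
   Context: Two-layer loss system with parameters $(m,n,\lambda,\mu)$ ($m\in\mathbb{Z}_+^K$ layer-1 servers dedicated per class, $n$ shared layer-2 servers, arrival rates $\lambda_k$, service rates $\mu_k$): Markov process on $S=\{x\in\mathbb{Z}_+^K\times\mathbb{Z}_+^K:x_{1,k}\le m_k\ \forall k,\ \sum_kx_{2,k}\le n\}$ with transitions $x\mapsto x+e_{1,k}$ at rate $\lambda_k1(x_{1,k}<m_k)$, $x\mapsto x+e_{2,k}$ at rate $\lambda_k1(x_{1,k}=m_k,\sum_lx_{2,l}<n)$, $x\mapsto x-e_{i,k}$ at rate $\mu_kx_{i,k}$. The maximum packing system has the same arrival transitions but departures $x\mapsto x-e_{1,k}$ at rate $\mu_kx_{1,k}1(x_{2,k}=0)$ and $x\mapsto x-e_{2,k}$ at rate $\mu_kx_{1,k}1(x_{2,k}>0)+\mu_kx_{2,k}$. Each of these processes has a unique stationary distribution. $|x|=\sum_{i,k}x_{i,k}$. For a system with stationary state $\bar X$: $a_k=\mathbb{E}(\bar X_{1,k}+\bar X_{2,k})$, $\theta_k=\mu_ka_k$, $\theta=\sum_k\theta_k$, $a=\sum_ka_k$, $b_k=P(\bar X\in B_k)$ with $B_k=\{x:x_{1,k}=m_k,\sum_lx_{2,l}=n\}$, and the overall blocking probability $b$ is defined by $(\sum_k\lambda_k)(1-b)=\theta$, i.e. $b=\sum_k\lambda_kb_k/\sum_k\lambda_k$. $\le_{\mathrm{st}}$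 is the usual stochastic order of real random variables. *)

theory Defs
  imports Complex_Main
begin

text \<open>Classes are indexed by 0..<K. A state is a pair (x1, x2) of functions
nat => nat (layer-1 and layer-2 occupancies), which vanish outside 0..<K.\<close>

type_synonym state = "(nat \<Rightarrow> nat) \<times> (nat \<Rightarrow> nat)"

definition state_space :: "nat \<Rightarrow> (nat \<Rightarrow> nat) \<Rightarrow> nat \<Rightarrow> state set" where
  "state_space K m n = {(x1, x2).
      (\<forall>k<K. x1 k \<le> m k) \<and> (\<forall>k\<ge>K. x1 k = 0 \<and> x2 k = 0) \<and> (\<Sum>k<K. x2 k) \<le> n}"

definition size_st :: "nat \<Rightarrow> state \<Rightarrow> nat" where
  "size_st K x = (\<Sum>k<K. fst x k + snd x k)"

definition add1 :: "state \<Rightarrow> nat \<Rightarrow> state" where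
  "add1 x k = ((fst x)(k := fst x k + 1), snd x)"
definition add2 :: "state \<Rightarrow> nat \<Rightarrow> state" where
  "add2 x k = (fst x, (snd x)(k := snd x k + 1))"
definition sub1 :: "state \<Rightarrow> nat \<Rightarrow> state" where
  "sub1 x k = ((fst x)(k := fst x k - 1), snd x)"
definition sub2 :: "state \<Rightarrow> nat \<Rightarrow> state" where
  "sub2 x k = (fst x, (snd x)(k := snd x k - 1))"

text \<open>Transition rate from x to y (for y \<noteq> x) of the two-layer loss system.\<close>
definition loss_rate ::
  "nat \<Rightarrow> (nat \<Rightarrow> nat) \<Rightarrow> nat \<Rightarrow> (nat \<Rightarrow> real) \<Rightarrow> (nat \<Rightarrow> real) \<Rightarrow> state \<Rightarrow> state \<Rightarrow> real" where
  "loss_rate K m n lam mu x y = (\<Sum>k<K.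
      (if y = add1 x k \<and> fst x k < m k then lam k else 0)
    + (if y = add2 x k \<and> fst x k = m k \<and> (\<Sum>l<K. snd x l) < n then lam k else 0)
    + (if y = sub1 x k then mu k * real (fst x k) else 0)
    + (if y = sub2 x k then mu k * real (snd x k) else 0))"

text \<open>Transition rate from x to y (for y \<noteq> x) of the maximum packing system.\<close>
definition mp_rate ::
  "nat \<Rightarrow> (nat \<Rightarrow> nat) \<Rightarrow> nat \<Rightarrow> (nat \<Rightarrow> real) \<Rightarrow> (nat \<Rightarrow> real) \<Rightarrow> state \<Rightarrow> state \<Rightarrow> real" where
  "mp_rate K m n lam mu x y = (\<Sum>k<K.
      (if y = add1 x k \<and> fst x k < m k then lam k else 0)
    + (if y = add2 x k \<and> fst x k = m k \<and> (\<Sum>l<K. snd x l) < n then lam k else 0)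
    + (if y = sub1 x k \<and> snd x k = 0 then mu k * real (fst x k) else 0)
    + (if y = sub2 x k then
         (if snd x k > 0 then mu k * real (fst x k) else 0) + mu k * real (snd x k)
       else 0))"

definition stationary :: "'s set \<Rightarrow> ('s \<Rightarrow> 's \<Rightarrow> real) \<Rightarrow> ('s \<Rightarrow> real) \<Rightarrow> bool" where
  "stationary S q p \<longleftrightarrow> (\<forall>x\<in>S. p x \<ge> 0) \<and> (\<Sum>x\<in>S. p x) = 1 \<and>
     (\<forall>y\<in>S. (\<Sum>x\<in>S-{y}. p x * q x y) = p y * (\<Sum>x\<in>S-{y}. q y x))"

definition size_st_le :: "nat \<Rightarrow> state set \<Rightarrow> (state \<Rightarrow> real) \<Rightarrow> state set \<Rightarrow> (state \<Rightarrow> real) \<Rightarrow> bool" where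
  "size_st_le K S1 p1 S2 p2 \<longleftrightarrow>
     (\<forall>t::real. (\<Sum>x\<in>{x\<in>S1. real (size_st K x) > t}. p1 x)
              \<le> (\<Sum>x\<in>{x\<in>S2. real (size_st K x) > t}. p2 x))"

definition mean_k :: "state set \<Rightarrow> (state \<Rightarrow> real) \<Rightarrow> nat \<Rightarrow> real" where
  "mean_k S p k = (\<Sum>x\<in>S. p x * real (fst x k + snd x k))"

definition mean_total :: "nat \<Rightarrow> state set \<Rightarrow> (state \<Rightarrow> real) \<Rightarrow> real" where
  "mean_total K S p = (\<Sum>k<K. mean_k S p k)"

definition throughput :: "nat \<Rightarrow> (nat \<Rightarrow> real) \<Rightarrow> state set \<Rightarrow> (state \<Rightarrow> real) \<Rightarrow> real" where
  "throughput K mu S p = (\<Sum>k<K. mu k * mean_k S p k)"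

definition blocking_set :: "nat \<Rightarrow> (nat \<Rightarrow> nat) \<Rightarrow> nat \<Rightarrow> nat \<Rightarrow> state set" where
  "blocking_set K m n k = {x. fst x k = m k \<and> (\<Sum>l<K. snd x l) = n}"

definition blocking :: "nat \<Rightarrow> (nat \<Rightarrow> nat) \<Rightarrow> nat \<Rightarrow> (nat \<Rightarrow> real) \<Rightarrow> state set \<Rightarrow> (state \<Rightarrow> real) \<Rightarrow> real" where
  "blocking K m n lam S p =
     (\<Sum>k<K. lam k * (\<Sum>x\<in>S \<inter> blocking_set K m n k. p x)) / (\<Sum>k<K. lam k)"

definition C_set :: "nat \<Rightarrow> (nat \<Rightarrow> nat) \<Rightarrow> nat \<Rightarrow> (nat \<Rightarrow> nat) set" where
  "C_set K m n = {m'. (\<forall>k<K. m' k \<ge> m k) \<and> (\<Sum>k<K. m' k) = (\<Sum>k<K. m k) + n}"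

end

theory Submission
  imports Defs
begin

text \<open>Each system is a Markov chain driven by events (arrivals and departures of each class), and
  all comparisons come from couplings.  For two event-driven chains and a set \<open>R\<close> of pairs of
  states, synchronised events fire jointly, the remaining rates of the first chain fire alone, and
  the remaining rates of the second chain fire alone or, when both states hold the same number of
  customers, jointly with remaining rates of the first chain; this keeps the coupled chain in \<open>R\<close>.
  The coupled chain has a stationary distribution whose marginals are stationary for the two
  chains, hence equal to the given ones, because the empty state is reachable from everywhere.
  So \<open>|x| \<le> |y|\<close> on \<open>R\<close> gives the stochastic order of the numbers of customers.

  The maximum packing system in which every class is served at the smallest rate \<open>\<nu>\<close>
  dominates the loss system on \<open>x\<^sub>1 \<le> y\<^sub>1, |x| \<le> |y|\<close>: when \<open>|x| = |y|\<close> its total departure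
  rate \<open>\<nu> |y|\<close> is at most that of the loss system.  Likewise the loss system dominates the
  dedicated system \<open>(m', 0, \<lambda>, M)\<close>, with \<open>M\<close> the largest service rate, on
  \<open>x\<^sub>k \<le> y\<^sub>1\<^sub>k + m'\<^sub>k - m\<^sub>k, |x| \<le> |y|\<close>.  The throughput bounds follow from
  \<open>\<nu> a \<le> \<theta> \<le> M a\<close>, and the blocking bounds from the class balance
  \<open>\<lambda>\<^sub>k (1 - b\<^sub>k) = \<mu>\<^sub>k a\<^sub>k\<close>, which gives \<open>b = 1 - \<theta> / \<Sum>\<^sub>k \<lambda>\<^sub>k\<close>.\<close>

definition global_balance :: "'s set \<Rightarrow> ('s \<Rightarrow> 's \<Rightarrow> real) \<Rightarrow> ('s \<Rightarrow> real) \<Rightarrow> bool" where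
  "global_balance S q v \<longleftrightarrow> (\<forall>y\<in>S. (\<Sum>x\<in>S-{y}. v x * q x y) = v y * (\<Sum>x\<in>S-{y}. q y x))"

lemma stationary_global_balance: "stationary S q p \<Longrightarrow> global_balance S q p"
  by (simp add: stationary_def global_balance_def)

lemma stationary_nonneg: "stationary S q p \<Longrightarrow> x \<in> S \<Longrightarrow> p x \<ge> 0"
  by (simp add: stationary_def)

lemma stationary_normalize:
  assumes "global_balance S q v" "\<forall>x\<in>S. v x \<ge> 0" "(\<Sum>x\<in>S. v x) > 0"
  shows "stationary S q (\<lambda>x. v x / (\<Sum>u\<in>S. v u))"
  using assms unfolding stationary_def global_balance_def
  by (auto simp: sum_divide_distrib[symmetric] times_divide_eq_left)

lemma global_balance_diff:
  assumes "global_balance S q v1" "global_balance S q v2"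
  shows "global_balance S q (\<lambda>x. v1 x - c * v2 x)"
  unfolding global_balance_def
proof
  fix y assume y: "y \<in> S"
  have "(\<Sum>x\<in>S-{y}. (v1 x - c * v2 x) * q x y)
      = (\<Sum>x\<in>S-{y}. v1 x * q x y) - c * (\<Sum>x\<in>S-{y}. v2 x * q x y)"
    by (simp add: left_diff_distrib sum_subtractf sum_distrib_left mult.assoc)
  also have "\<dots> = (v1 y - c * v2 y) * (\<Sum>x\<in>S-{y}. q y x)"
    using assms y unfolding global_balance_def by (simp add: algebra_simps)
  finally show "(\<Sum>x\<in>S-{y}. (v1 x - c * v2 x) * q x y) = (v1 y - c * v2 y) * (\<Sum>x\<in>S-{y}. q y x)" .
qed

lemma sum_off_diagonal_swap:
  assumes "finite S"
  shows "(\<Sum>x\<in>S. \<Sum>y\<in>S-{x}. g x y) = (\<Sum>y\<in>S. \<Sum>x\<in>S-{y}. g x y)"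
proof -
  have off: "(\<Sum>y\<in>S-{x}. h y) = (\<Sum>y\<in>S. if y = x then 0 else h y)" for x and h :: "'a \<Rightarrow> 'b"
    using assms by (intro sum.mono_neutral_cong_left) auto
  have "(\<Sum>x\<in>S. \<Sum>y\<in>S. if y = x then 0 else g x y) = (\<Sum>y\<in>S. \<Sum>x\<in>S. if x = y then 0 else g x y)"
    by (subst sum.swap) (simp add: eq_commute)
  then show ?thesis by (simp add: off)
qed

lemma global_balance_drift:
  assumes "finite S" "global_balance S q p"
  shows "(\<Sum>x\<in>S. p x * (\<Sum>y\<in>S-{x}. q x y * (f y - f x))) = 0"
proof -
  have "(\<Sum>x\<in>S. p x * (\<Sum>y\<in>S-{x}. q x y * f y)) = (\<Sum>x\<in>S. \<Sum>y\<in>S-{x}. p x * q x y * f y)"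
    by (simp add: sum_distrib_left mult.assoc)
  also have "\<dots> = (\<Sum>y\<in>S. \<Sum>x\<in>S-{y}. p x * q x y * f y)"
    using assms(1) by (rule sum_off_diagonal_swap)
  also have "\<dots> = (\<Sum>y\<in>S. f y * (\<Sum>x\<in>S-{y}. p x * q x y))"
    by (simp add: sum_distrib_left mult.commute mult.left_commute)
  also have "\<dots> = (\<Sum>y\<in>S. f y * (p y * (\<Sum>x\<in>S-{y}. q y x)))"
    using assms(2) by (simp add: global_balance_def)
  finally show ?thesis
    by (simp add: right_diff_distrib sum_subtractf sum_distrib_left mult_ac)
qed

lemma global_balance_cut:
  assumes "finite S" "A \<subseteq> S" "global_balance S q p"
  shows "(\<Sum>y\<in>A. \<Sum>x\<in>S-A. p x * q x y) = (\<Sum>y\<in>A. p y * (\<Sum>x\<in>S-A. q y x))"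
proof -
  have fA: "finite A" using assms finite_subset by blast
  have split: "(\<Sum>x\<in>S-{y}. g x) = (\<Sum>x\<in>A-{y}. g x) + (\<Sum>x\<in>S-A. g x)" if "y \<in> A" for y and g :: "_ \<Rightarrow> real"
  proof -
    have "S - {y} = (A - {y}) \<union> (S - A)" using that assms(2) by auto
    then show ?thesis using assms(1) fA by (subst sum.union_disjoint[symmetric]) auto
  qed
  have "(\<Sum>y\<in>A. \<Sum>x\<in>S-{y}. p x * q x y) = (\<Sum>y\<in>A. p y * (\<Sum>x\<in>S-{y}. q y x))"
    using assms(2,3) unfolding global_balance_def by (intro sum.cong) auto
  then have "(\<Sum>y\<in>A. \<Sum>x\<in>A-{y}. p x * q x y) + (\<Sum>y\<in>A. \<Sum>x\<in>S-A. p x * q x y)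
      = (\<Sum>y\<in>A. \<Sum>x\<in>A-{y}. p y * q y x) + (\<Sum>y\<in>A. p y * (\<Sum>x\<in>S-A. q y x))"
    by (simp add: split sum.distrib sum_distrib_left distrib_left)
  moreover have "(\<Sum>y\<in>A. \<Sum>x\<in>A-{y}. p x * q x y) = (\<Sum>y\<in>A. \<Sum>x\<in>A-{y}. p y * q y x)"
    using sum_off_diagonal_swap[OF fA, of "\<lambda>x y. p x * q x y"] by simp
  ultimately show ?thesis by simp
qed

section \<open>Existence and uniqueness of stationary distributions\<close>

text \<open>Censoring: watching the chain only outside \<open>z\<close> turns every passage
  \<open>x \<rightarrow> z \<rightarrow> y\<close> into a direct jump, taken with the exit distribution of \<open>z\<close>.\<close>

lemma global_balance_uncensor:
  fixes q :: "'s \<Rightarrow> 's \<Rightarrow> real" and F :: "'s set" and z :: 's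
  defines "qz \<equiv> (\<Sum>x\<in>F. q z x)"
  assumes fin: "finite F" and z: "z \<notin> F" and qz: "qz > 0"
    and bal: "global_balance F (\<lambda>x y. q x y + q x z * q z y / qz) v"
  shows "global_balance (insert z F) q (v(z := (\<Sum>u\<in>F. v u * q u z) / qz))"
  unfolding global_balance_def
proof
  define w where "w = v(z := (\<Sum>u\<in>F. v u * q u z) / qz)"
  fix y assume y: "y \<in> insert z F"
  show "(\<Sum>x\<in>insert z F - {y}. w x * q x y) = w y * (\<Sum>x\<in>insert z F - {y}. q y x)"
  proof (cases "y = z")
    case True
    then have "insert z F - {y} = F" using z by auto
    moreover have "(\<Sum>x\<in>F. w x * q x z) = (\<Sum>x\<in>F. v x * q x z)"
      using z by (intro sum.cong) (auto simp: w_def)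
    ultimately show ?thesis using True qz by (simp add: w_def qz_def)
  next
    case False
    then have yF: "y \<in> F" using y by auto
    have e: "insert z F - {y} = insert z (F - {y})" and zn: "z \<notin> F - {y}" and fin': "finite (F - {y})"
      using False z fin by auto
    define A where "A = (\<Sum>x\<in>F-{y}. v x * q x y)"
    define B where "B = (\<Sum>x\<in>F-{y}. q y x)"
    have inflow: "(\<Sum>x\<in>insert z F - {y}. w x * q x y) = w z * q z y + A"
    proof -
      have "(\<Sum>x\<in>F-{y}. w x * q x y) = A" unfolding A_def using z
        by (intro sum.cong) (auto simp: w_def)
      then show ?thesis unfolding e using zn fin' by simp
    qed
    have outflow: "(\<Sum>x\<in>insert z F - {y}. q y x) = q y z + B"
      unfolding e B_def using zn fin' by simp
    have s1: "(\<Sum>x\<in>F-{y}. v x * q x z) = w z * qz - v y * q y z"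
      using qz yF fin by (simp add: w_def sum_diff1)
    have s2: "(\<Sum>x\<in>F-{y}. q z x) = qz - q z y"
      using yF fin by (simp add: qz_def sum_diff1)
    have "(\<Sum>x\<in>F-{y}. v x * (q x y + q x z * q z y / qz)) = A + q z y / qz * (\<Sum>x\<in>F-{y}. v x * q x z)"
      unfolding A_def by (simp add: algebra_simps sum.distrib sum_distrib_left sum_divide_distrib)
    also have "\<dots> = A + q z y * w z - v y * q y z * q z y / qz"
      using qz by (simp add: s1 field_simps)
    finally have censored_inflow: "(\<Sum>x\<in>F-{y}. v x * (q x y + q x z * q z y / qz))
        = A + q z y * w z - v y * q y z * q z y / qz" .
    have "(\<Sum>x\<in>F-{y}. q y x + q y z * q z x / qz) = B + q y z / qz * (\<Sum>x\<in>F-{y}. q z x)"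
      unfolding B_def by (simp add: algebra_simps sum.distrib sum_distrib_left sum_divide_distrib)
    also have "\<dots> = B + q y z - q y z * q z y / qz"
      using qz by (simp add: s2 field_simps)
    finally have censored_outflow: "(\<Sum>x\<in>F-{y}. q y x + q y z * q z x / qz) = B + q y z - q y z * q z y / qz" .
    have "A + q z y * w z = v y * (B + q y z)"
      using bal yF censored_inflow censored_outflow unfolding global_balance_def by (simp add: algebra_simps)
    then show ?thesis using inflow outflow False by (simp add: w_def algebra_simps)
  qed
qed

lemma stationary_absorbing:
  assumes fin: "finite S" and z: "z \<in> S" and absorbing: "\<forall>y\<in>S-{z}. q z y = 0"
  shows "stationary S q (\<lambda>x. if x = z then 1 else 0)"
  unfolding stationary_def
proof (intro conjI ballI)
  fix y assume y: "y \<in> S"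
  have "(\<Sum>x\<in>S - {y}. (if x = z then 1 else 0) * q x y) = (\<Sum>x\<in>S - {y}. if x = z then q z y else 0)"
    by (rule sum.cong) auto
  also have "\<dots> = (if y = z then 0 else q z y)" using fin z by (simp add: sum.delta')
  finally show "(\<Sum>x\<in>S - {y}. (if x = z then 1 else 0) * q x y)
      = (if y = z then 1 else 0) * (\<Sum>x\<in>S - {y}. q y x)"
    using y absorbing by simp
qed (use fin z in auto)

lemma stationary_exists:
  assumes "finite S" "S \<noteq> {}" and "\<forall>x\<in>S. \<forall>y\<in>S. x \<noteq> y \<longrightarrow> q x y \<ge> 0"
  shows "\<exists>p. stationary S q p"
  using assms
proof (induction S arbitrary: q rule: finite_ne_induct)
  case (singleton z)
  show ?case by (rule exI[of _ "\<lambda>_. 1"]) (auto simp: stationary_def)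
next
  case (insert z F)
  define qz where "qz = (\<Sum>x\<in>F. q z x)"
  have qnn: "\<And>x y. x \<in> insert z F \<Longrightarrow> y \<in> insert z F \<Longrightarrow> x \<noteq> y \<Longrightarrow> q x y \<ge> 0"
    using insert.prems by blast
  have qz_nn: "\<forall>x\<in>F. q z x \<ge> 0" using qnn insert.hyps by auto
  show ?case
  proof (cases "qz = 0")
    case True
    then have z0: "\<forall>y\<in>F. q z y = 0"
      using qz_nn insert.hyps unfolding qz_def by (simp add: sum_nonneg_eq_0_iff)
    then have "stationary (insert z F) q (\<lambda>x. if x = z then 1 else 0)"
      using insert.hyps by (intro stationary_absorbing) auto
    then show ?thesis by blast
  next
    case False
    then have qzp: "qz > 0" using qz_nn by (simp add: qz_def order_less_le sum_nonneg)
    define q' where "q' = (\<lambda>x y. q x y + q x z * q z y / qz)"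
    have "\<forall>x\<in>F. \<forall>y\<in>F. x \<noteq> y \<longrightarrow> q' x y \<ge> 0"
      unfolding q'_def using qnn qzp insert.hyps
      by (auto intro!: add_nonneg_nonneg divide_nonneg_pos mult_nonneg_nonneg)
    from insert.IH[OF this] obtain p' where p': "stationary F q' p'" by blast
    define wz where "wz = (\<Sum>u\<in>F. p' u * q u z) / qz"
    have wz_nn: "wz \<ge> 0" unfolding wz_def using p' qnn qzp insert.hyps
      by (intro divide_nonneg_pos sum_nonneg mult_nonneg_nonneg) (auto simp: stationary_def)
    have bal: "global_balance (insert z F) q (p'(z := wz))"
      unfolding wz_def qz_def
      by (rule global_balance_uncensor[OF insert.hyps(1,3)])
         (use qzp p' in \<open>simp_all add: qz_def q'_def stationary_global_balance\<close>)
    have "(\<Sum>x\<in>F. (p'(z := wz)) x) = (\<Sum>x\<in>F. p' x)"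
      using insert.hyps by (intro sum.cong) auto
    then have sum: "(\<Sum>x\<in>insert z F. (p'(z := wz)) x) = 1 + wz"
      using insert.hyps p' by (simp add: stationary_def)
    have "\<forall>x\<in>insert z F. (p'(z := wz)) x \<ge> 0" using p' wz_nn by (auto simp: stationary_def)
    from stationary_normalize[OF bal this] sum wz_nn show ?thesis by auto
  qed
qed

definition jump :: "'s set \<Rightarrow> ('s \<Rightarrow> 's \<Rightarrow> real) \<Rightarrow> 's \<Rightarrow> 's \<Rightarrow> bool" where
  "jump S q x y \<longleftrightarrow> x \<in> S \<and> y \<in> S \<and> x \<noteq> y \<and> q x y > 0"

lemma global_balance_zero_propagates:
  assumes fin: "finite S" and bal: "global_balance S q v" and vnn: "\<forall>x\<in>S. v x \<ge> 0"
    and qnn: "\<forall>x\<in>S. \<forall>y\<in>S. x \<noteq> y \<longrightarrow> q x y \<ge> 0"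
    and path: "(jump S q)\<^sup>*\<^sup>* x y" and vy: "v y = 0"
  shows "v x = 0"
  using path vy
proof (induction rule: converse_rtranclp_induct)
  case (step x x')
  then have x': "x' \<in> S" and x: "x \<in> S - {x'}" and q: "q x x' > 0" and vx': "v x' = 0"
    by (auto simp: jump_def)
  have "(\<Sum>u\<in>S-{x'}. v u * q u x') = 0"
    using bal x' vx' unfolding global_balance_def by simp
  moreover have "\<forall>u\<in>S-{x'}. v u * q u x' \<ge> 0" using vnn qnn x' by auto
  ultimately have "v x * q x x' = 0"
    using sum_nonneg_eq_0_iff[of "S - {x'}" "\<lambda>u. v u * q u x'"] fin x by blast
  then show ?case using q by simp
qed

text \<open>No probability flows out of a closed set \<open>C\<close>, so by global balance none flows in either.\<close>

lemma global_balance_no_entry_into_closed: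
  assumes fin: "finite S" and C: "C \<subseteq> S" and closed: "\<forall>u\<in>C. \<forall>y\<in>S-C. q u y = 0"
    and bal: "global_balance S q p" and pnn: "\<forall>x\<in>S. p x \<ge> 0"
    and qnn: "\<forall>x\<in>S. \<forall>y\<in>S. x \<noteq> y \<longrightarrow> q x y \<ge> 0"
    and y: "y \<in> S - C" and u: "u \<in> C" and q: "q y u > 0"
  shows "p y = 0"
proof -
  have fC: "finite (S - C)" "finite C" using fin C finite_subset by auto
  have into_C: "\<forall>u\<in>C. q y' u \<ge> 0" if "y' \<in> S - C" for y'
    using that qnn C by (metis DiffE subsetD)
  have "(\<Sum>y\<in>S-C. p y * (\<Sum>u\<in>S-(S-C). q y u)) = (\<Sum>y\<in>S-C. \<Sum>u\<in>S-(S-C). p u * q u y)"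
    using global_balance_cut[OF fin _ bal, of "S - C"] by simp
  also have "\<dots> = 0" using closed C by (intro sum.neutral ballI) (auto simp: Diff_Diff_Int)
  finally have out0: "(\<Sum>y\<in>S-C. p y * (\<Sum>u\<in>C. q y u)) = 0"
    using C by (simp add: Diff_Diff_Int Int_absorb1)
  have "\<forall>y\<in>S-C. p y * (\<Sum>u\<in>C. q y u) \<ge> 0"
    using pnn into_C by (auto intro!: mult_nonneg_nonneg sum_nonneg)
  then have "p y * (\<Sum>u\<in>C. q y u) = 0"
    using out0 fC y sum_nonneg_eq_0_iff[of "S - C" "\<lambda>y. p y * (\<Sum>u\<in>C. q y u)"] by blast
  moreover have "(\<Sum>u\<in>C. q y u) \<ge> q y u"
    using y u into_C fC by (intro member_le_sum) auto
  ultimately show ?thesis using q by auto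
qed

lemma stationary_vanishes_outside_class:
  assumes fin: "finite S" and zS: "z \<in> S" and reach: "\<forall>x\<in>S. (jump S q)\<^sup>*\<^sup>* x z"
    and qnn: "\<forall>x\<in>S. \<forall>y\<in>S. x \<noteq> y \<longrightarrow> q x y \<ge> 0" and p: "stationary S q p"
    and x: "x \<in> S" "\<not> (jump S q)\<^sup>*\<^sup>* z x"
  shows "p x = 0"
proof -
  define C where "C = {x\<in>S. (jump S q)\<^sup>*\<^sup>* z x}"
  have bal: "global_balance S q p" and pnn: "\<forall>x\<in>S. p x \<ge> 0"
    using p by (auto simp: stationary_global_balance stationary_def)
  have closed: "\<forall>u\<in>C. \<forall>y\<in>S-C. q u y = 0"
  proof (intro ballI, rule ccontr)
    fix u y assume "u \<in> C" "y \<in> S - C" "q u y \<noteq> 0"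
    then have "jump S q u y" using qnn unfolding C_def jump_def by (auto simp: order_less_le)
    then show False
      using \<open>u \<in> C\<close> \<open>y \<in> S - C\<close> unfolding C_def by (auto intro: rtranclp.rtrancl_into_rtrancl)
  qed
  have "p y = 0" if "(jump S q)\<^sup>*\<^sup>* y z" "y \<in> S - C" for y
    using that
  proof (induction rule: converse_rtranclp_induct)
    case base then show ?case using zS by (simp add: C_def)
  next
    case (step y y')
    show ?case
    proof (cases "y' \<in> C")
      case True
      then show ?thesis
        using global_balance_no_entry_into_closed[OF fin _ closed bal pnn qnn] step
        by (auto simp: C_def jump_def)
    next
      case False
      then have "p y' = 0" using step by (auto simp: jump_def)
      then show ?thesis
        using global_balance_zero_propagates[OF fin bal pnn qnn r_into_rtranclp[of "jump S q"]] step
        by blast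
    qed
  qed
  then show ?thesis using x reach unfolding C_def by blast
qed

lemma stationary_pos_if_reached:
  assumes fin: "finite S" and w: "w \<in> S" and reach: "\<forall>x\<in>S. (jump S q)\<^sup>*\<^sup>* x w"
    and qnn: "\<forall>x\<in>S. \<forall>y\<in>S. x \<noteq> y \<longrightarrow> q x y \<ge> 0" and p: "stationary S q p"
  shows "p w > 0"
proof (rule ccontr)
  assume "\<not> p w > 0"
  then have "p w = 0" using stationary_nonneg[OF p w] by simp
  then have "\<forall>x\<in>S. p x = 0"
    using global_balance_zero_propagates[OF fin stationary_global_balance[OF p] _ qnn] p reach
    by (auto simp: stationary_def)
  then show False using p by (simp add: stationary_def)
qed

text \<open>If one state is reachable from all others, the stationary distribution is unique: on the
  closed class of that state two stationary distributions are proportional, since the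
  nonnegative balanced measure \<open>p1 - c p2\<close> with \<open>c = min p1 / p2\<close> has a zero and hence vanishes.\<close>

lemma stationary_unique:
  assumes fin: "finite S" and zS: "z \<in> S" and reach: "\<forall>x\<in>S. (jump S q)\<^sup>*\<^sup>* x z"
    and qnn: "\<forall>x\<in>S. \<forall>y\<in>S. x \<noteq> y \<longrightarrow> q x y \<ge> 0"
    and p1: "stationary S q p1" and p2: "stationary S q p2"
  shows "\<forall>x\<in>S. p1 x = p2 x"
proof -
  define C where "C = {x\<in>S. (jump S q)\<^sup>*\<^sup>* z x}"
  have fC: "finite C" and zC: "z \<in> C" using fin zS unfolding C_def by auto
  have pos2: "p2 w > 0" if "w \<in> C" for w
    using that reach by (intro stationary_pos_if_reached[OF fin _ _ qnn p2])
      (auto simp: C_def intro: rtranclp_trans)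
  define c where "c = Min ((\<lambda>x. p1 x / p2 x) ` C)"
  have "c \<in> (\<lambda>x. p1 x / p2 x) ` C" unfolding c_def using fC zC by (intro Min_in) auto
  then obtain w0 where w0: "w0 \<in> C" "c = p1 w0 / p2 w0" by blast
  define v where "v = (\<lambda>x. p1 x - c * p2 x)"
  have bal: "global_balance S q v"
    unfolding v_def using p1 p2 by (intro global_balance_diff stationary_global_balance)
  have vnn: "\<forall>x\<in>S. v x \<ge> 0"
  proof
    fix x assume xS: "x \<in> S"
    show "v x \<ge> 0"
    proof (cases "x \<in> C")
      case True
      then have "c \<le> p1 x / p2 x" unfolding c_def using fC by (intro Min_le) auto
      then show ?thesis using pos2[OF True] by (simp add: v_def pos_le_divide_eq)
    next
      case False
      then have "p1 x = 0" "p2 x = 0"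
        using stationary_vanishes_outside_class[OF fin zS reach qnn] p1 p2 xS by (auto simp: C_def)
      then show ?thesis by (simp add: v_def)
    qed
  qed
  have "v w0 = 0" using w0 pos2[OF w0(1)] by (simp add: v_def)
  then have v0: "\<forall>x\<in>S. v x = 0"
    using global_balance_zero_propagates[OF fin bal vnn qnn] reach w0(1)
    by (auto simp: C_def intro: rtranclp_trans)
  then have "sum p1 S = c * sum p2 S" unfolding v_def by (simp add: sum_distrib_left)
  then have "c = 1" using p1 p2 by (simp add: stationary_def)
  then show ?thesis using v0 unfolding v_def by simp
qed

section \<open>Event-driven chains and their couplings\<close>

lemma global_balance_lumped:
  fixes R :: "'s set" and \<pi> :: "'s \<Rightarrow> 'a"
  assumes fR: "finite R" and fS: "finite S1" and piR: "\<pi> ` R \<subseteq> S1"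
    and bal: "global_balance R qc \<rho>"
    and fibre: "\<forall>s\<in>R. \<forall>x'\<in>S1. x' \<noteq> \<pi> s \<longrightarrow> (\<Sum>s'\<in>{s'\<in>R. \<pi> s' = x'}. qc s s') = q1 (\<pi> s) x'"
  shows "global_balance S1 q1 (\<lambda>x. \<Sum>s\<in>{s\<in>R. \<pi> s = x}. \<rho> s)"
  unfolding global_balance_def
proof
  fix x0 assume x0: "x0 \<in> S1"
  define P where "P = (\<lambda>x. \<Sum>s\<in>{s\<in>R. \<pi> s = x}. \<rho> s)"
  define A where "A = {s\<in>R. \<pi> s = x0}"
  have AR: "A \<subseteq> R" unfolding A_def by auto
  have fRA: "finite (R - A)" and fS': "finite (S1 - {x0})" using fR fS by auto
  have piRA: "\<pi> ` (R - A) \<subseteq> S1 - {x0}" using piR unfolding A_def by auto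
  have fibre_RA: "{s'\<in>R-A. \<pi> s' = x} = {s'\<in>R. \<pi> s' = x}" if "x \<in> S1 - {x0}" for x
    using that unfolding A_def by auto
  have "(\<Sum>s\<in>A. \<Sum>s'\<in>R-A. \<rho> s' * qc s' s) = (\<Sum>s'\<in>R-A. \<rho> s' * (\<Sum>s\<in>A. qc s' s))"
    by (subst sum.swap) (simp add: sum_distrib_left)
  also have "\<dots> = (\<Sum>s'\<in>R-A. \<rho> s' * q1 (\<pi> s') x0)"
    using fibre x0 unfolding A_def by (intro sum.cong refl) auto
  also have "\<dots> = (\<Sum>x\<in>S1-{x0}. \<Sum>s'\<in>{s'\<in>R-A. \<pi> s' = x}. \<rho> s' * q1 (\<pi> s') x0)"
    by (rule sum.group[OF fRA fS' piRA, symmetric])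
  also have "\<dots> = (\<Sum>x\<in>S1-{x0}. P x * q1 x x0)"
  proof (intro sum.cong refl)
    fix x assume x: "x \<in> S1 - {x0}"
    show "(\<Sum>s'\<in>{s'\<in>R-A. \<pi> s' = x}. \<rho> s' * q1 (\<pi> s') x0) = P x * q1 x x0"
      unfolding fibre_RA[OF x] P_def sum_distrib_right by (intro sum.cong) auto
  qed
  finally have inflow: "(\<Sum>s\<in>A. \<Sum>s'\<in>R-A. \<rho> s' * qc s' s) = (\<Sum>x\<in>S1-{x0}. P x * q1 x x0)" .
  have outrate: "(\<Sum>s'\<in>R-A. qc s s') = (\<Sum>x\<in>S1-{x0}. q1 x0 x)" if s: "s \<in> A" for s
  proof -
    have "(\<Sum>s'\<in>R-A. qc s s') = (\<Sum>x\<in>S1-{x0}. \<Sum>s'\<in>{s'\<in>R-A. \<pi> s' = x}. qc s s')"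
      by (rule sum.group[OF fRA fS' piRA, symmetric])
    also have "\<dots> = (\<Sum>x\<in>S1-{x0}. q1 x0 x)"
    proof (intro sum.cong refl)
      fix x assume x: "x \<in> S1 - {x0}"
      show "(\<Sum>s'\<in>{s'\<in>R-A. \<pi> s' = x}. qc s s') = q1 x0 x"
        unfolding fibre_RA[OF x] using s x fibre by (auto simp: A_def)
    qed
    finally show ?thesis .
  qed
  have "(\<Sum>s\<in>A. \<rho> s * (\<Sum>s'\<in>R-A. qc s s')) = P x0 * (\<Sum>x\<in>S1-{x0}. q1 x0 x)"
    using outrate by (simp add: sum_distrib_right P_def A_def)
  then show "(\<Sum>x\<in>S1-{x0}. P x * q1 x x0) = P x0 * (\<Sum>x\<in>S1-{x0}. q1 x0 x)"
    using global_balance_cut[OF fR AR bal] inflow by simp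
qed

lemma stationary_lumped:
  fixes R :: "'s set" and \<pi> :: "'s \<Rightarrow> 'a"
  assumes fR: "finite R" and fS: "finite S1" and piR: "\<pi> ` R \<subseteq> S1"
    and st: "stationary R qc \<rho>"
    and fibre: "\<forall>s\<in>R. \<forall>x'\<in>S1. x' \<noteq> \<pi> s \<longrightarrow> (\<Sum>s'\<in>{s'\<in>R. \<pi> s' = x'}. qc s s') = q1 (\<pi> s) x'"
  shows "stationary S1 q1 (\<lambda>x. \<Sum>s\<in>{s\<in>R. \<pi> s = x}. \<rho> s)"
  using global_balance_lumped[OF fR fS piR stationary_global_balance[OF st] fibre]
    sum.group[OF fR fS piR, of \<rho>] st
  by (auto simp: stationary_def global_balance_def intro!: sum_nonneg)

definition event_driven ::
  "'s set \<Rightarrow> ('s \<Rightarrow> 's \<Rightarrow> real) \<Rightarrow> 'e set \<Rightarrow> ('s \<Rightarrow> 'e \<Rightarrow> 's) \<Rightarrow> ('s \<Rightarrow> 'e \<Rightarrow> real) \<Rightarrow> bool" where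
  "event_driven S q E move rate \<longleftrightarrow> finite E \<and>
     (\<forall>x\<in>S. \<forall>e\<in>E. rate x e \<ge> 0 \<and> (rate x e \<noteq> 0 \<longrightarrow> move x e \<in> S)) \<and>
     (\<forall>x\<in>S. \<forall>x'. x' \<noteq> x \<longrightarrow> q x x' = (\<Sum>e\<in>E. if x' = move x e then rate x e else 0))"

lemma event_driven_nonneg: "event_driven S q E move rate \<Longrightarrow> \<forall>x\<in>S. \<forall>y\<in>S. x \<noteq> y \<longrightarrow> q x y \<ge> 0"
  unfolding event_driven_def by (auto intro!: sum_nonneg)

lemma event_driven_drift:
  assumes ev: "event_driven S q E move rate" and fin: "finite S" and x: "x \<in> S"
  shows "(\<Sum>x'\<in>S-{x}. q x x' * (f x' - f x)) = (\<Sum>e\<in>E. rate x e * (f (move x e) - f x))"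
proof -
  have "(\<Sum>x'\<in>S-{x}. q x x' * (f x' - f x))
      = (\<Sum>x'\<in>S-{x}. \<Sum>e\<in>E. if x' = move x e then rate x e * (f x' - f x) else 0)"
    using ev x unfolding event_driven_def
    by (intro sum.cong refl) (auto simp: sum_distrib_right intro!: sum.cong)
  also have "\<dots> = (\<Sum>e\<in>E. \<Sum>x'\<in>S-{x}. if x' = move x e then rate x e * (f x' - f x) else 0)"
    by (rule sum.swap)
  also have "\<dots> = (\<Sum>e\<in>E. if move x e \<in> S - {x} then rate x e * (f (move x e) - f x) else 0)"
    using fin by (simp add: sum.delta')
  also have "\<dots> = (\<Sum>e\<in>E. rate x e * (f (move x e) - f x))"
    using ev x unfolding event_driven_def by (intro sum.cong refl) auto
  finally show ?thesis .
qed

lemma event_driven_reaches_by_descent: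
  fixes f :: "'s \<Rightarrow> nat"
  assumes ev: "event_driven S q E move rate"
    and descent: "\<forall>x\<in>S. x \<noteq> z \<longrightarrow> (\<exists>e\<in>E. rate x e > 0 \<and> f (move x e) < f x)"
  shows "x \<in> S \<Longrightarrow> (jump S q)\<^sup>*\<^sup>* x z"
proof (induction "f x" arbitrary: x rule: less_induct)
  case less
  show ?case
  proof (cases "x = z")
    case False
    then obtain e where e: "e \<in> E" "rate x e > 0" "f (move x e) < f x"
      using descent less.prems by blast
    have fE: "finite E" and moveS: "move x e \<in> S" and rnn: "\<forall>e\<in>E. rate x e \<ge> 0"
      using ev e less.prems unfolding event_driven_def by auto
    have ne: "move x e \<noteq> x" using e(3) by auto
    have "q x (move x e) = (\<Sum>e'\<in>E. if move x e = move x e' then rate x e' else 0)"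
      using ev less.prems ne unfolding event_driven_def by auto
    also have "\<dots> \<ge> rate x e"
      using member_le_sum[of e E "\<lambda>e'. if move x e = move x e' then rate x e' else 0"] e fE rnn
      by auto
    finally have "jump S q x (move x e)"
      using e(2) less.prems moveS ne unfolding jump_def by auto
    then show ?thesis using less.hyps[OF e(3) moveS] by (rule converse_rtranclp_into_rtranclp)
  qed simp
qed

lemma event_driven_stationary_unique:
  fixes f :: "'s \<Rightarrow> nat"
  assumes ev: "event_driven S q E move rate" and fin: "finite S" and z: "z \<in> S"
    and descent: "\<forall>x\<in>S. x \<noteq> z \<longrightarrow> (\<exists>e\<in>E. rate x e > 0 \<and> f (move x e) < f x)"
    and p1: "stationary S q p1" and p2: "stationary S q p2"
  shows "\<forall>x\<in>S. p1 x = p2 x"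
  using event_driven_reaches_by_descent[OF ev descent]
  by (intro stationary_unique[OF fin z _ event_driven_nonneg[OF ev] p1 p2]) blast

fun move_or_stay :: "('s \<Rightarrow> 'e \<Rightarrow> 's) \<Rightarrow> 's \<Rightarrow> 'e option \<Rightarrow> 's" where
  "move_or_stay move x None = x"
| "move_or_stay move x (Some e) = move x e"

definition with_idle :: "'e set \<Rightarrow> 'e option set" where
  "with_idle E = insert None (Some ` E)"

lemma sum_with_idle: "finite E \<Longrightarrow> (\<Sum>i\<in>with_idle E. g i) = g None + (\<Sum>e\<in>E. g (Some e))"
  unfolding with_idle_def by (simp add: sum.reindex)

definition coupled_generator :: "'e set \<Rightarrow> ('s \<Rightarrow> 'e \<Rightarrow> 's) \<Rightarrow> ('t \<Rightarrow> 'e \<Rightarrow> 't)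
    \<Rightarrow> ('s \<times> 't \<Rightarrow> 'e option \<Rightarrow> 'e option \<Rightarrow> real) \<Rightarrow> 's \<times> 't \<Rightarrow> 's \<times> 't \<Rightarrow> real" where
  "coupled_generator E move1 move2 w s s' = (\<Sum>i\<in>with_idle E. \<Sum>j\<in>with_idle E.
      if s' = (move_or_stay move1 (fst s) i, move_or_stay move2 (snd s) j) then w s i j else 0)"

lemma coupled_generator_fibre:
  fixes \<pi> :: "'s \<times> 't \<Rightarrow> 'a"
  assumes fR: "finite R"
    and supp: "\<forall>i\<in>with_idle E. \<forall>j\<in>with_idle E.
       w s i j \<noteq> 0 \<longrightarrow> (move_or_stay move1 (fst s) i, move_or_stay move2 (snd s) j) \<in> R"
  shows "(\<Sum>s'\<in>{s'\<in>R. \<pi> s' = u}. coupled_generator E move1 move2 w s s')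
    = (\<Sum>i\<in>with_idle E. \<Sum>j\<in>with_idle E.
         if \<pi> (move_or_stay move1 (fst s) i, move_or_stay move2 (snd s) j) = u then w s i j else 0)"
proof -
  have fB: "finite {s'\<in>R. \<pi> s' = u}" using fR by auto
  have "(\<Sum>s'\<in>{s'\<in>R. \<pi> s' = u}. coupled_generator E move1 move2 w s s')
     = (\<Sum>i\<in>with_idle E. \<Sum>j\<in>with_idle E. \<Sum>s'\<in>{s'\<in>R. \<pi> s' = u}.
          if s' = (move_or_stay move1 (fst s) i, move_or_stay move2 (snd s) j) then w s i j else 0)"
    unfolding coupled_generator_def by (subst sum.swap) (simp add: sum.swap[of _ "{s'\<in>R. \<pi> s' = u}"])
  also have "\<dots> = (\<Sum>i\<in>with_idle E. \<Sum>j\<in>with_idle E.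
         if \<pi> (move_or_stay move1 (fst s) i, move_or_stay move2 (snd s) j) = u then w s i j else 0)"
  proof (intro sum.cong refl)
    fix i j assume "i \<in> with_idle E" "j \<in> with_idle E"
    then show "(\<Sum>s'\<in>{s'\<in>R. \<pi> s' = u}.
          if s' = (move_or_stay move1 (fst s) i, move_or_stay move2 (snd s) j) then w s i j else 0)
        = (if \<pi> (move_or_stay move1 (fst s) i, move_or_stay move2 (snd s) j) = u then w s i j else 0)"
      using supp fB by (cases "w s i j = 0") (auto simp: sum.delta')
  qed
  finally show ?thesis .
qed

definition residual_rate :: "('e \<Rightarrow> real) \<Rightarrow> ('e \<Rightarrow> real) \<Rightarrow> ('e \<Rightarrow> bool) \<Rightarrow> 'e \<Rightarrow> real" where
  "residual_rate a b D i = a i - (if D i then b i else 0)"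

definition residual_total :: "'e set \<Rightarrow> ('e \<Rightarrow> real) \<Rightarrow> ('e \<Rightarrow> real) \<Rightarrow> ('e \<Rightarrow> bool) \<Rightarrow> real" where
  "residual_total E a b D = (\<Sum>i\<in>E. residual_rate a b D i)"

definition unsynced_total :: "'e set \<Rightarrow> ('e \<Rightarrow> real) \<Rightarrow> ('e \<Rightarrow> bool) \<Rightarrow> real" where
  "unsynced_total E b D = (\<Sum>j\<in>E. if D j then 0 else b j)"

text \<open>Coupling of two event-rate vectors \<open>a\<close> and \<open>b\<close>: a synchronised event \<open>e\<close> (\<open>D e\<close>)
  fires in both components at rate \<open>b e\<close>, and the residual rates of the first component fire in
  the first component only.  An unsynchronised event of the second component fires alone or,
  if \<open>t\<close>, jointly with a residual event of the first component drawn proportionally to its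
  residual rate; then \<open>\<Sum> b \<le> \<Sum> a\<close> keeps the rates of the first component alone nonnegative.
  Division by a vanishing residual total is harmless: then all unsynchronised rates of \<open>b\<close> vanish.\<close>

fun coupled_rate :: "'e set \<Rightarrow> ('e \<Rightarrow> real) \<Rightarrow> ('e \<Rightarrow> real) \<Rightarrow> ('e \<Rightarrow> bool) \<Rightarrow> bool
    \<Rightarrow> 'e option \<Rightarrow> 'e option \<Rightarrow> real" where
  "coupled_rate E a b D t (Some i) (Some j) = (if i = j \<and> D j then b j else 0)
      + (if \<not> D j \<and> t then b j * residual_rate a b D i / residual_total E a b D else 0)"
| "coupled_rate E a b D t (Some i) None = (if t
      then residual_rate a b D i * (1 - unsynced_total E b D / residual_total E a b D)
      else residual_rate a b D i)"
| "coupled_rate E a b D t None (Some j) = (if \<not> D j \<and> \<not> t then b j else 0)"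
| "coupled_rate E a b D t None None = 0"

context
  fixes E :: "'e set" and a b :: "'e \<Rightarrow> real" and D :: "'e \<Rightarrow> bool" and t :: bool
  assumes fE: "finite E" and a_nonneg: "\<forall>e\<in>E. a e \<ge> 0" and b_nonneg: "\<forall>e\<in>E. b e \<ge> 0"
    and sync_le: "\<forall>e\<in>E. D e \<longrightarrow> b e \<le> a e" and matched_le: "t \<longrightarrow> (\<Sum>e\<in>E. b e) \<le> (\<Sum>e\<in>E. a e)"
begin

lemma residual_rate_nonneg: "i \<in> E \<Longrightarrow> residual_rate a b D i \<ge> 0"
  using a_nonneg sync_le unfolding residual_rate_def by auto

lemma residual_total_nonneg: "residual_total E a b D \<ge> 0"
  unfolding residual_total_def using residual_rate_nonneg by (intro sum_nonneg) auto

lemma unsynced_total_nonneg: "unsynced_total E b D \<ge> 0"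
  unfolding unsynced_total_def using b_nonneg by (intro sum_nonneg) auto

lemma unsynced_le_residual: "t \<Longrightarrow> unsynced_total E b D \<le> residual_total E a b D"
proof -
  have "(\<Sum>e\<in>E. b e) = (\<Sum>e\<in>E. if D e then b e else 0) + unsynced_total E b D"
    unfolding unsynced_total_def by (simp add: sum.distrib[symmetric] if_distrib cong: if_cong)
  then have "residual_total E a b D - unsynced_total E b D = (\<Sum>e\<in>E. a e) - (\<Sum>e\<in>E. b e)"
    unfolding residual_total_def residual_rate_def by (simp add: sum_subtractf)
  then show "t \<Longrightarrow> ?thesis" using matched_le by simp
qed

lemma coupled_rate_nonneg:
  assumes "i \<in> with_idle E" "j \<in> with_idle E"
  shows "coupled_rate E a b D t i j \<ge> 0"
proof (cases i; cases j)
  fix i' j' assume "i = Some i'" "j = Some j'"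
  then show ?thesis
    using assms b_nonneg residual_rate_nonneg residual_total_nonneg
    by (auto simp: with_idle_def intro!: add_nonneg_nonneg divide_nonneg_nonneg mult_nonneg_nonneg)
next
  fix i' assume c: "i = Some i'" "j = None"
  then have i': "i' \<in> E" using assms unfolding with_idle_def by auto
  have "t \<Longrightarrow> unsynced_total E b D / residual_total E a b D \<le> 1"
    using unsynced_le_residual residual_total_nonneg unsynced_total_nonneg
    by (cases "residual_total E a b D = 0") (auto simp: divide_le_eq_1)
  then show ?thesis using c residual_rate_nonneg[OF i'] by simp
qed (use assms in \<open>auto simp: with_idle_def b_nonneg\<close>)

lemma coupled_rate_row_sum:
  assumes e: "e \<in> E"
  shows "(\<Sum>j\<in>with_idle E. coupled_rate E a b D t (Some e) j) = a e"
proof -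
  let ?r = "residual_rate a b D e" and ?R = "residual_total E a b D"
  have "(\<Sum>j\<in>E. if e = j \<and> D j then b j else 0) = (\<Sum>j\<in>E. if e = j then (if D e then b e else 0) else 0)"
    by (intro sum.cong) auto
  also have "\<dots> = (if D e then b e else 0)" using fE e by (simp add: sum.delta)
  finally have sync: "(\<Sum>j\<in>E. if e = j \<and> D j then b j else 0) = (if D e then b e else 0)" .
  have "(\<Sum>j\<in>E. if \<not> D j \<and> t then b j * ?r / ?R else 0)
      = (\<Sum>j\<in>E. (if D j then 0 else b j) * (if t then ?r / ?R else 0))"
    by (intro sum.cong) auto
  then have matched: "(\<Sum>j\<in>E. if \<not> D j \<and> t then b j * ?r / ?R else 0)
      = (if t then unsynced_total E b D * ?r / ?R else 0)"
    unfolding unsynced_total_def sum_distrib_right[symmetric] by simp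
  have "(\<Sum>j\<in>with_idle E. coupled_rate E a b D t (Some e) j)
      = coupled_rate E a b D t (Some e) None + (\<Sum>j\<in>E. coupled_rate E a b D t (Some e) (Some j))"
    by (rule sum_with_idle[OF fE])
  also have "\<dots> = residual_rate a b D e + (if D e then b e else 0)"
    using sync matched by (cases t) (simp_all add: sum.distrib algebra_simps)
  also have "\<dots> = a e" unfolding residual_rate_def by simp
  finally show ?thesis .
qed

lemma coupled_rate_col_sum:
  assumes e: "e \<in> E"
  shows "(\<Sum>i\<in>with_idle E. coupled_rate E a b D t i (Some e)) = b e"
proof -
  let ?R = "residual_total E a b D"
  have "(\<Sum>i\<in>E. if i = e \<and> D e then b e else 0) = (if D e then b e else 0)"
    using fE e by (cases "D e") (auto simp: sum.delta)
  moreover have "(\<Sum>i\<in>E. if \<not> D e \<and> t then b e * residual_rate a b D i / ?R else 0)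
     = (if \<not> D e \<and> t then b e * ?R / ?R else 0)"
    unfolding residual_total_def by (auto simp: sum_divide_distrib sum_distrib_left)
  ultimately have s: "(\<Sum>i\<in>E. coupled_rate E a b D t (Some i) (Some e))
      = (if D e then b e else 0) + (if \<not> D e \<and> t then b e * ?R / ?R else 0)"
    by (simp add: sum.distrib)
  have "b e = 0" if "\<not> D e" "t" "?R = 0"
  proof -
    have "(\<Sum>j\<in>E. if D j then 0 else b j) = 0"
      using unsynced_le_residual[OF that(2)] unsynced_total_nonneg that(3)
      unfolding unsynced_total_def by simp
    then have "\<forall>j\<in>E. (if D j then 0 else b j) = 0"
      using sum_nonneg_eq_0_iff[OF fE, of "\<lambda>j. if D j then 0 else b j"] b_nonneg by auto
    then show ?thesis using e that(1) by auto
  qed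
  then show ?thesis using fE s by (auto simp: sum_with_idle)
qed

end

lemma coupled_rate_support:
  assumes "i \<in> with_idle E" "j \<in> with_idle E" "coupled_rate E a b D t i j \<noteq> 0"
    and sync: "\<And>e. e \<in> E \<Longrightarrow> D e \<Longrightarrow> b e \<noteq> 0 \<Longrightarrow> P (Some e) (Some e)"
    and matched: "\<And>e f. e \<in> E \<Longrightarrow> f \<in> E \<Longrightarrow> \<not> D f \<Longrightarrow> t \<Longrightarrow> b f \<noteq> 0 \<Longrightarrow>
      residual_rate a b D e \<noteq> 0 \<Longrightarrow> P (Some e) (Some f)"
    and fst_only: "\<And>e. e \<in> E \<Longrightarrow> residual_rate a b D e \<noteq> 0 \<Longrightarrow> P (Some e) None"
    and snd_only: "\<And>f. f \<in> E \<Longrightarrow> \<not> D f \<Longrightarrow> \<not> t \<Longrightarrow> b f \<noteq> 0 \<Longrightarrow> P None (Some f)"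
  shows "P i j"
  using assms(1-3)
  by (cases i; cases j) (auto simp: with_idle_def intro: sync matched fst_only snd_only split: if_splits)

lemma residual_rate_nonzero:
  assumes "residual_rate a b D i \<noteq> 0" "D i \<longrightarrow> b i \<le> a i" "b i \<ge> 0"
  shows "a i \<noteq> 0" "D i \<Longrightarrow> a i \<noteq> b i"
  using assms unfolding residual_rate_def by (auto split: if_splits)

lemma coupled_generator_fst_fibre:
  assumes fE: "finite E" and fR: "finite R"
    and supp: "\<forall>i\<in>with_idle E. \<forall>j\<in>with_idle E.
       w s i j \<noteq> 0 \<longrightarrow> (move_or_stay move1 (fst s) i, move_or_stay move2 (snd s) j) \<in> R"
    and row: "\<forall>e\<in>E. (\<Sum>j\<in>with_idle E. w s (Some e) j) = rate (fst s) e"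
    and ne: "x' \<noteq> fst s"
  shows "(\<Sum>s'\<in>{s'\<in>R. fst s' = x'}. coupled_generator E move1 move2 w s s')
    = (\<Sum>e\<in>E. if x' = move1 (fst s) e then rate (fst s) e else 0)"
proof -
  have "(\<Sum>s'\<in>{s'\<in>R. fst s' = x'}. coupled_generator E move1 move2 w s s')
      = (\<Sum>i\<in>with_idle E. if move_or_stay move1 (fst s) i = x' then (\<Sum>j\<in>with_idle E. w s i j) else 0)"
    unfolding coupled_generator_fibre[where \<pi>=fst and w=w and s=s, OF fR supp]
    by (intro sum.cong refl) auto
  also have "\<dots> = (\<Sum>e\<in>E. if move1 (fst s) e = x' then (\<Sum>j\<in>with_idle E. w s (Some e) j) else 0)"
    using ne by (simp add: sum_with_idle[OF fE])
  also have "\<dots> = (\<Sum>e\<in>E. if x' = move1 (fst s) e then rate (fst s) e else 0)"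
    using row by (intro sum.cong refl) auto
  finally show ?thesis .
qed

lemma coupled_generator_snd_fibre:
  assumes fE: "finite E" and fR: "finite R"
    and supp: "\<forall>i\<in>with_idle E. \<forall>j\<in>with_idle E.
       w s i j \<noteq> 0 \<longrightarrow> (move_or_stay move1 (fst s) i, move_or_stay move2 (snd s) j) \<in> R"
    and col: "\<forall>e\<in>E. (\<Sum>i\<in>with_idle E. w s i (Some e)) = rate (snd s) e"
    and ne: "y' \<noteq> snd s"
  shows "(\<Sum>s'\<in>{s'\<in>R. snd s' = y'}. coupled_generator E move1 move2 w s s')
    = (\<Sum>e\<in>E. if y' = move2 (snd s) e then rate (snd s) e else 0)"
proof -
  have "(\<Sum>s'\<in>{s'\<in>R. snd s' = y'}. coupled_generator E move1 move2 w s s')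
      = (\<Sum>j\<in>with_idle E. if move_or_stay move2 (snd s) j = y' then (\<Sum>i\<in>with_idle E. w s i j) else 0)"
    unfolding coupled_generator_fibre[where \<pi>=snd and w=w and s=s, OF fR supp]
    by (subst sum.swap) (intro sum.cong refl, auto)
  also have "\<dots> = (\<Sum>e\<in>E. if move2 (snd s) e = y' then (\<Sum>i\<in>with_idle E. w s i (Some e)) else 0)"
    using ne by (simp add: sum_with_idle[OF fE])
  also have "\<dots> = (\<Sum>e\<in>E. if y' = move2 (snd s) e then rate (snd s) e else 0)"
    using col by (intro sum.cong refl) auto
  finally show ?thesis .
qed

lemma coupling_exists:
  fixes R :: "('s \<times> 't) set" and E :: "'e set"
  assumes ev1: "event_driven S1 q1 E move1 rate1" and ev2: "event_driven S2 q2 E move2 rate2"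
    and fS1: "finite S1" and fS2: "finite S2" and RS: "R \<subseteq> S1 \<times> S2" and Rne: "R \<noteq> {}"
    and sync_le: "\<And>x y e. (x, y) \<in> R \<Longrightarrow> e \<in> E \<Longrightarrow> D x y e \<Longrightarrow> rate2 y e \<le> rate1 x e"
    and matched_le: "\<And>x y. (x, y) \<in> R \<Longrightarrow> t x y \<Longrightarrow> (\<Sum>e\<in>E. rate2 y e) \<le> (\<Sum>e\<in>E. rate1 x e)"
    and step_sync: "\<And>x y e. (x, y) \<in> R \<Longrightarrow> e \<in> E \<Longrightarrow> D x y e \<Longrightarrow> rate2 y e \<noteq> 0 \<Longrightarrow>
       (move1 x e, move2 y e) \<in> R"
    and step_matched: "\<And>x y i j. (x, y) \<in> R \<Longrightarrow> i \<in> E \<Longrightarrow> j \<in> E \<Longrightarrow> \<not> D x y j \<Longrightarrow> t x y \<Longrightarrow>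
       rate2 y j \<noteq> 0 \<Longrightarrow> residual_rate (rate1 x) (rate2 y) (D x y) i \<noteq> 0 \<Longrightarrow> (move1 x i, move2 y j) \<in> R"
    and step_fst: "\<And>x y i. (x, y) \<in> R \<Longrightarrow> i \<in> E \<Longrightarrow>
       residual_rate (rate1 x) (rate2 y) (D x y) i \<noteq> 0 \<Longrightarrow> (move1 x i, y) \<in> R"
    and step_snd: "\<And>x y j. (x, y) \<in> R \<Longrightarrow> j \<in> E \<Longrightarrow> \<not> D x y j \<Longrightarrow> \<not> t x y \<Longrightarrow>
       rate2 y j \<noteq> 0 \<Longrightarrow> (x, move2 y j) \<in> R"
  shows "\<exists>\<rho>. (\<forall>s\<in>R. \<rho> s \<ge> 0)
     \<and> stationary S1 q1 (\<lambda>x. \<Sum>s\<in>{s\<in>R. fst s = x}. \<rho> s)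
     \<and> stationary S2 q2 (\<lambda>y. \<Sum>s\<in>{s\<in>R. snd s = y}. \<rho> s)"
proof -
  define w where
    "w = (\<lambda>s. coupled_rate E (rate1 (fst s)) (rate2 (snd s)) (D (fst s) (snd s)) (t (fst s) (snd s)))"
  have fE: "finite E" using ev1 unfolding event_driven_def by auto
  have fR: "finite R" using fS1 fS2 RS finite_subset by blast
  have rate_nonneg: "\<forall>e\<in>E. rate1 (fst s) e \<ge> 0" "\<forall>e\<in>E. rate2 (snd s) e \<ge> 0" if "s \<in> R" for s
    using that RS ev1 ev2 unfolding event_driven_def by auto
  have sync_le': "\<forall>e\<in>E. D (fst s) (snd s) e \<longrightarrow> rate2 (snd s) e \<le> rate1 (fst s) e"
    and matched_le': "t (fst s) (snd s) \<longrightarrow> (\<Sum>e\<in>E. rate2 (snd s) e) \<le> (\<Sum>e\<in>E. rate1 (fst s) e)"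
    if "s \<in> R" for s
    using that sync_le matched_le by (cases s; auto)+
  note coupling_facts = fE rate_nonneg sync_le' matched_le'
  have supp: "\<forall>i\<in>with_idle E. \<forall>j\<in>with_idle E.
      w s i j \<noteq> 0 \<longrightarrow> (move_or_stay move1 (fst s) i, move_or_stay move2 (snd s) j) \<in> R"
    if s: "s \<in> R" for s
  proof (intro ballI impI)
    fix i j assume "i \<in> with_idle E" "j \<in> with_idle E" and "w s i j \<noteq> 0"
    moreover obtain x y where xy: "s = (x, y)" by (cases s)
    ultimately show "(move_or_stay move1 (fst s) i, move_or_stay move2 (snd s) j) \<in> R"
      using s step_sync step_matched step_fst step_snd
      by (auto simp: w_def elim!: coupled_rate_support[where
            P = "\<lambda>i j. (move_or_stay move1 x i, move_or_stay move2 y j) \<in> R"])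
  qed
  have "\<forall>x\<in>R. \<forall>y\<in>R. x \<noteq> y \<longrightarrow> coupled_generator E move1 move2 w x y \<ge> 0"
    unfolding coupled_generator_def w_def using coupled_rate_nonneg[OF coupling_facts]
    by (intro ballI impI sum_nonneg) simp
  then obtain \<rho> where \<rho>: "stationary R (coupled_generator E move1 move2 w) \<rho>"
    using stationary_exists[OF fR Rne] by blast
  have fst_fibre: "\<forall>s\<in>R. \<forall>x'\<in>S1. x' \<noteq> fst s \<longrightarrow>
      (\<Sum>s'\<in>{s'\<in>R. fst s' = x'}. coupled_generator E move1 move2 w s s') = q1 (fst s) x'"
  proof (intro ballI impI)
    fix s x' assume s: "s \<in> R" and "x' \<in> S1" and ne: "x' \<noteq> fst s"
    have "\<forall>e\<in>E. (\<Sum>j\<in>with_idle E. w s (Some e) j) = rate1 (fst s) e"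
      unfolding w_def using coupled_rate_row_sum[OF coupling_facts] s by blast
    from coupled_generator_fst_fibre[where w=w and s=s and rate=rate1, OF fE fR supp[OF s] this ne]
    show "(\<Sum>s'\<in>{s'\<in>R. fst s' = x'}. coupled_generator E move1 move2 w s s') = q1 (fst s) x'"
      using ev1 ne subsetD[OF RS s] unfolding event_driven_def by (simp add: mem_Times_iff)
  qed
  have snd_fibre: "\<forall>s\<in>R. \<forall>y'\<in>S2. y' \<noteq> snd s \<longrightarrow>
      (\<Sum>s'\<in>{s'\<in>R. snd s' = y'}. coupled_generator E move1 move2 w s s') = q2 (snd s) y'"
  proof (intro ballI impI)
    fix s y' assume s: "s \<in> R" and "y' \<in> S2" and ne: "y' \<noteq> snd s"
    have "\<forall>e\<in>E. (\<Sum>i\<in>with_idle E. w s i (Some e)) = rate2 (snd s) e"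
      unfolding w_def using coupled_rate_col_sum[OF coupling_facts] s by blast
    from coupled_generator_snd_fibre[where w=w and s=s and rate=rate2, OF fE fR supp[OF s] this ne]
    show "(\<Sum>s'\<in>{s'\<in>R. snd s' = y'}. coupled_generator E move1 move2 w s s') = q2 (snd s) y'"
      using ev2 ne subsetD[OF RS s] unfolding event_driven_def by (simp add: mem_Times_iff)
  qed
  have "fst ` R \<subseteq> S1" "snd ` R \<subseteq> S2" using RS by auto
  then show ?thesis
    using \<rho> stationary_lumped[OF fR fS1 _ \<rho> fst_fibre] stationary_lumped[OF fR fS2 _ \<rho> snd_fibre]
    by (auto simp: stationary_def)
qed

lemma sum_marginal:
  fixes \<rho> :: "'s \<Rightarrow> real" and g :: "'a \<Rightarrow> real"
  assumes "finite R" "\<pi> ` R \<subseteq> S" "finite S" "\<forall>x\<in>S. p x = (\<Sum>s\<in>{s\<in>R. \<pi> s = x}. \<rho> s)"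
  shows "(\<Sum>x\<in>S. p x * g x) = (\<Sum>s\<in>R. \<rho> s * g (\<pi> s))"
proof -
  have "(\<Sum>x\<in>S. p x * g x) = (\<Sum>x\<in>S. \<Sum>s\<in>{s\<in>R. \<pi> s = x}. \<rho> s * g (\<pi> s))"
  proof (intro sum.cong refl)
    fix x assume "x \<in> S"
    then have "p x * g x = (\<Sum>s\<in>{s\<in>R. \<pi> s = x}. \<rho> s * g x)"
      using assms(4) by (simp add: sum_distrib_right)
    then show "p x * g x = (\<Sum>s\<in>{s\<in>R. \<pi> s = x}. \<rho> s * g (\<pi> s))" by simp
  qed
  also have "\<dots> = (\<Sum>s\<in>R. \<rho> s * g (\<pi> s))"
    by (rule sum.group[OF assms(1,3,2)])
  finally show ?thesis .
qed

lemma coupling_expectation_mono: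
  fixes g h :: "_ \<Rightarrow> real"
  assumes fS1: "finite S1" and fS2: "finite S2" and RS: "R \<subseteq> S1 \<times> S2"
    and \<rho>: "\<forall>s\<in>R. \<rho> s \<ge> 0" and gh: "\<forall>s\<in>R. g (fst s) \<le> h (snd s)"
    and p1: "\<forall>x\<in>S1. p1 x = (\<Sum>s\<in>{s\<in>R. fst s = x}. \<rho> s)"
    and p2: "\<forall>y\<in>S2. p2 y = (\<Sum>s\<in>{s\<in>R. snd s = y}. \<rho> s)"
  shows "(\<Sum>x\<in>S1. p1 x * g x) \<le> (\<Sum>y\<in>S2. p2 y * h y)"
proof -
  have fR: "finite R" using fS1 fS2 RS finite_subset by blast
  have R1: "fst ` R \<subseteq> S1" and R2: "snd ` R \<subseteq> S2" using RS by auto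
  show ?thesis
    using sum_marginal[OF fR R1 fS1 p1, of g] sum_marginal[OF fR R2 fS2 p2, of h] \<rho> gh
    by (simp add: sum_mono mult_left_mono)
qed

lemma mean_total_eq: "mean_total K S p = (\<Sum>x\<in>S. p x * real (size_st K x))"
  unfolding mean_total_def mean_k_def size_st_def
  by (subst sum.swap) (simp add: sum_distrib_left)

lemma coupling_size_st_le:
  assumes fS1: "finite S1" and fS2: "finite S2" and RS: "R \<subseteq> S1 \<times> S2"
    and \<rho>: "\<forall>s\<in>R. \<rho> s \<ge> 0" and le: "\<forall>s\<in>R. size_st K (fst s) \<le> size_st K (snd s)"
    and p1: "\<forall>x\<in>S1. p1 x = (\<Sum>s\<in>{s\<in>R. fst s = x}. \<rho> s)"
    and p2: "\<forall>y\<in>S2. p2 y = (\<Sum>s\<in>{s\<in>R. snd s = y}. \<rho> s)"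
  shows "size_st_le K S1 p1 S2 p2 \<and> mean_total K S1 p1 \<le> mean_total K S2 p2"
proof
  note mono = coupling_expectation_mono[OF fS1 fS2 RS \<rho> _ p1 p2]
  show "size_st_le K S1 p1 S2 p2"
    unfolding size_st_le_def
  proof
    fix t :: real
    have "(\<Sum>x\<in>{x\<in>S. real (size_st K x) > t}. p x) = (\<Sum>x\<in>S. p x * of_bool (real (size_st K x) > t))"
      if "finite S" for S and p :: "state \<Rightarrow> real"
      unfolding sum.inter_filter[OF that] by (intro sum.cong) auto
    moreover have "\<forall>s\<in>R. of_bool (real (size_st K (fst s)) > t)
        \<le> (of_bool (real (size_st K (snd s)) > t) :: real)"
      using le by fastforce
    ultimately show "(\<Sum>x\<in>{x\<in>S1. real (size_st K x) > t}. p1 x)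
        \<le> (\<Sum>x\<in>{x\<in>S2. real (size_st K x) > t}. p2 x)"
      using mono fS1 fS2 by presburger
  qed
  show "mean_total K S1 p1 \<le> mean_total K S2 p2"
    unfolding mean_total_eq using le by (intro mono) auto
qed

section \<open>The two-layer loss and maximum packing systems\<close>

lemma fst_add1[simp]: "fst (add1 x k) = (fst x)(k := fst x k + 1)"
  and snd_add1[simp]: "snd (add1 x k) = snd x"
  and fst_add2[simp]: "fst (add2 x k) = fst x"
  and snd_add2[simp]: "snd (add2 x k) = (snd x)(k := snd x k + 1)"
  and fst_sub1[simp]: "fst (sub1 x k) = (fst x)(k := fst x k - 1)"
  and snd_sub1[simp]: "snd (sub1 x k) = snd x"
  and fst_sub2[simp]: "fst (sub2 x k) = fst x"
  and snd_sub2[simp]: "snd (sub2 x k) = (snd x)(k := snd x k - 1)"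
  by (auto simp: add1_def add2_def sub1_def sub2_def)

lemma sum_fun_upd: "k < (K::nat) \<Longrightarrow> (\<Sum>l<K. (f(k := v)) l) + f k = (\<Sum>l<K. f l) + (v::nat)"
proof -
  assume k: "k < K"
  have r: "(\<Sum>l<K. g l) = g k + (\<Sum>l\<in>{..<K}-{k}. g l)" for g :: "nat \<Rightarrow> nat"
    by (rule sum.remove) (use k in auto)
  have c: "(\<Sum>l\<in>{..<K}-{k}. (f(k:=v)) l) = (\<Sum>l\<in>{..<K}-{k}. f l)" by (rule sum.cong) auto
  have "(\<Sum>l<K. (f(k := v)) l) = v + (\<Sum>l\<in>{..<K}-{k}. f l)"
    using r[of "f(k:=v)"] c by simp
  moreover have "(\<Sum>l<K. f l) = f k + (\<Sum>l\<in>{..<K}-{k}. f l)" by (rule r)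
  ultimately show ?thesis by simp
qed

lemma size_st_eq: "size_st K x = (\<Sum>l<K. fst x l) + (\<Sum>l<K. snd x l)"
  unfolding size_st_def by (simp add: sum.distrib)

lemma size_add1: "k < K \<Longrightarrow> size_st K (add1 x k) = size_st K x + 1"
  using sum_fun_upd[of k K "fst x" "fst x k + 1"] by (simp add: size_st_eq)

lemma size_add2: "k < K \<Longrightarrow> size_st K (add2 x k) = size_st K x + 1"
  using sum_fun_upd[of k K "snd x" "snd x k + 1"] by (simp add: size_st_eq)

lemma size_sub1: "k < K \<Longrightarrow> fst x k > 0 \<Longrightarrow> size_st K (sub1 x k) + 1 = size_st K x"
  using sum_fun_upd[of k K "fst x" "fst x k - 1"] by (simp add: size_st_eq)

lemma size_sub2: "k < K \<Longrightarrow> snd x k > 0 \<Longrightarrow> size_st K (sub2 x k) + 1 = size_st K x"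
  using sum_fun_upd[of k K "snd x" "snd x k - 1"] by (simp add: size_st_eq)

lemma sum_snd_add2: "k < K \<Longrightarrow> (\<Sum>l<K. snd (add2 x k) l) = (\<Sum>l<K. snd x l) + 1"
  using sum_fun_upd[of k K "snd x" "snd x k + 1"] by simp

lemma sum_snd_sub2: "k < K \<Longrightarrow> (\<Sum>l<K. snd (sub2 x k) l) \<le> (\<Sum>l<K. snd x l)"
  using sum_fun_upd[of k K "snd x" "snd x k - 1"] by simp

lemma sub2_id: "snd x k = 0 \<Longrightarrow> sub2 x k = x"
  unfolding sub2_def by (cases x) auto

lemma state_space_iff: "x \<in> state_space K m n \<longleftrightarrow>
  (\<forall>k<K. fst x k \<le> m k) \<and> (\<forall>k\<ge>K. fst x k = 0 \<and> snd x k = 0) \<and> (\<Sum>k<K. snd x k) \<le> n"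
  unfolding state_space_def by (cases x) auto

lemma sub1_in_state_space: "x \<in> state_space K m n \<Longrightarrow> sub1 x k \<in> state_space K m n"
  unfolding state_space_iff by auto
lemma sub2_in_state_space: "x \<in> state_space K m n \<Longrightarrow> k < K \<Longrightarrow> sub2 x k \<in> state_space K m n"
  unfolding state_space_iff using sum_snd_sub2[of k K x] by auto
lemma add1_in_state_space:
  "x \<in> state_space K m n \<Longrightarrow> k < K \<Longrightarrow> fst x k < m k \<Longrightarrow> add1 x k \<in> state_space K m n"
  unfolding state_space_iff by auto
lemma add2_in_state_space:
  "x \<in> state_space K m n \<Longrightarrow> k < K \<Longrightarrow> (\<Sum>l<K. snd x l) < n \<Longrightarrow> add2 x k \<in> state_space K m n"
  unfolding state_space_iff using sum_snd_add2[of k K x] by auto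

lemma finite_state_space: "finite (state_space K m n)"
proof -
  define N where "N = (\<Sum>k<K. m k) + n"
  define F where "F = {f::nat\<Rightarrow>nat. \<forall>x. (x \<in> {..<K} \<longrightarrow> f x \<in> {0..N}) \<and> (x \<notin> {..<K} \<longrightarrow> f x = 0)}"
  have fF: "finite F" unfolding F_def by (rule finite_set_of_finite_funs) auto
  have "state_space K m n \<subseteq> F \<times> F"
  proof
    fix x assume x: "x \<in> state_space K m n"
    have a: "fst x k \<le> N" if "k < K" for k
    proof -
      have "m k \<le> (\<Sum>k<K. m k)" using that by (intro member_le_sum) auto
      moreover have "fst x k \<le> m k" using x that unfolding state_space_iff by blast
      ultimately show ?thesis unfolding N_def by linarith
    qed
    have b: "snd x k \<le> N" if "k < K" for k
    proof -
      have "snd x k \<le> (\<Sum>k<K. snd x k)" using that by (intro member_le_sum) auto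
      moreover have "(\<Sum>k<K. snd x k) \<le> n" using x unfolding state_space_iff by blast
      ultimately show ?thesis unfolding N_def by linarith
    qed
    have c: "\<forall>k\<ge>K. fst x k = 0 \<and> snd x k = 0" using x unfolding state_space_iff by blast
    have "fst x \<in> F" unfolding F_def using a c by (auto simp: not_less)
    moreover have "snd x \<in> F" unfolding F_def using b c by (auto simp: not_less)
    ultimately show "x \<in> F \<times> F" by (simp add: mem_Times_iff)
  qed
  then show ?thesis using fF finite_subset by blast
qed

definition empty_state :: state where "empty_state = (\<lambda>_. 0, \<lambda>_. 0)"

lemma empty_state_in_state_space: "empty_state \<in> state_space K m n"
  unfolding state_space_iff empty_state_def by simp

lemma nonempty_state: "x \<in> state_space K m n \<Longrightarrow> x \<noteq> empty_state \<Longrightarrow> \<exists>k<K. fst x k > 0 \<or> snd x k > 0"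
proof (rule ccontr)
  assume x: "x \<in> state_space K m n" "x \<noteq> empty_state" "\<not> (\<exists>k<K. fst x k > 0 \<or> snd x k > 0)"
  then have "fst x = (\<lambda>_. 0)" "snd x = (\<lambda>_. 0)" unfolding state_space_iff
    by (auto simp: fun_eq_iff) (meson not_less)+
  then have "x = empty_state" unfolding empty_state_def by (cases x) auto
  then show False using x by simp
qed

lemma state_space_fst_le: "x \<in> state_space K m n \<Longrightarrow> k < K \<Longrightarrow> fst x k \<le> m k"
  and state_space_sum_snd_le: "x \<in> state_space K m n \<Longrightarrow> (\<Sum>k<K. snd x k) \<le> n"
  unfolding state_space_iff by blast+

datatype event = Arr nat | Dep1 nat | Dep2 nat

definition events :: "nat \<Rightarrow> event set" where
  "events K = Arr ` {..<K} \<union> Dep1 ` {..<K} \<union> Dep2 ` {..<K}"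

lemma finite_events: "finite (events K)"
  unfolding events_def by simp

lemma events_iff: "e \<in> events K \<longleftrightarrow> (\<exists>k<K. e = Arr k \<or> e = Dep1 k \<or> e = Dep2 k)"
  unfolding events_def by auto

lemma sum_events: "(\<Sum>e\<in>events K. g e) = (\<Sum>k<K. g (Arr k) + g (Dep1 k) + g (Dep2 k))"
proof -
  have "(\<Sum>e\<in>events K. g e) = sum g (Arr ` {..<K}) + sum g (Dep1 ` {..<K}) + sum g (Dep2 ` {..<K})"
    unfolding events_def by (subst sum.union_disjoint; auto)+
  then show ?thesis by (simp add: sum.reindex inj_on_def sum.distrib)
qed

definition arrival :: "nat \<Rightarrow> (nat \<Rightarrow> nat) \<Rightarrow> nat \<Rightarrow> state \<Rightarrow> nat \<Rightarrow> state" where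
  "arrival K m n x k = (if fst x k < m k then add1 x k
      else if fst x k = m k \<and> (\<Sum>l<K. snd x l) < n then add2 x k else x)"

fun loss_move :: "nat \<Rightarrow> (nat \<Rightarrow> nat) \<Rightarrow> nat \<Rightarrow> state \<Rightarrow> event \<Rightarrow> state" where
  "loss_move K m n x (Arr k) = arrival K m n x k"
| "loss_move K m n x (Dep1 k) = sub1 x k"
| "loss_move K m n x (Dep2 k) = sub2 x k"

fun loss_event_rate :: "(nat \<Rightarrow> real) \<Rightarrow> (nat \<Rightarrow> real) \<Rightarrow> state \<Rightarrow> event \<Rightarrow> real" where
  "loss_event_rate lam mu x (Arr k) = lam k"
| "loss_event_rate lam mu x (Dep1 k) = mu k * real (fst x k)"
| "loss_event_rate lam mu x (Dep2 k) = mu k * real (snd x k)"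

text \<open>In the maximum packing system every class-\<open>k\<close> departure is an event \<open>Dep1 k\<close>: it frees a
  layer-2 server whenever class \<open>k\<close> holds one, which is the repacking.\<close>

fun mp_move :: "nat \<Rightarrow> (nat \<Rightarrow> nat) \<Rightarrow> nat \<Rightarrow> state \<Rightarrow> event \<Rightarrow> state" where
  "mp_move K m n x (Arr k) = arrival K m n x k"
| "mp_move K m n x (Dep1 k) = (if snd x k = 0 then sub1 x k else sub2 x k)"
| "mp_move K m n x (Dep2 k) = x"

fun mp_event_rate :: "(nat \<Rightarrow> real) \<Rightarrow> (nat \<Rightarrow> real) \<Rightarrow> state \<Rightarrow> event \<Rightarrow> real" where
  "mp_event_rate lam mu x (Arr k) = lam k"
| "mp_event_rate lam mu x (Dep1 k) = mu k * real (fst x k + snd x k)"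
| "mp_event_rate lam mu x (Dep2 k) = 0"

lemma arrival_in_state_space:
  "x \<in> state_space K m n \<Longrightarrow> k < K \<Longrightarrow> arrival K m n x k \<in> state_space K m n"
  unfolding arrival_def using add1_in_state_space add2_in_state_space by auto

lemma arrival_rate_eq: "x' \<noteq> x \<Longrightarrow>
   (if x' = add1 x k \<and> fst x k < m k then lam k else 0)
 + (if x' = add2 x k \<and> fst x k = m k \<and> (\<Sum>l<K. snd x l) < n then lam k else 0)
 = (if x' = arrival K m n x k then lam k else (0::real))"
  unfolding arrival_def by auto

lemma loss_event_driven:
  assumes "\<forall>k<K. lam k \<ge> 0" "\<forall>k<K. mu k \<ge> 0"
  shows "event_driven (state_space K m n) (loss_rate K m n lam mu) (events K) (loss_move K m n)
    (loss_event_rate lam mu)"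
  unfolding event_driven_def
proof (intro conjI ballI allI impI)
  fix x e assume x: "x \<in> state_space K m n" and e: "e \<in> events K"
  obtain k where k: "k < K" and "e = Arr k \<or> e = Dep1 k \<or> e = Dep2 k"
    using e by (auto simp: events_iff)
  then show "0 \<le> loss_event_rate lam mu x e" "loss_move K m n x e \<in> state_space K m n"
    using assms x arrival_in_state_space[OF x k] sub1_in_state_space[OF x] sub2_in_state_space[OF x k]
    by auto
next
  fix x x' :: state assume "x' \<noteq> x"
  then show "loss_rate K m n lam mu x x'
      = (\<Sum>e\<in>events K. if x' = loss_move K m n x e then loss_event_rate lam mu x e else 0)"
    unfolding loss_rate_def sum_events using arrival_rate_eq[of x' x] by (simp cong: if_cong)
qed (rule finite_events)

lemma mp_event_driven:
  assumes "\<forall>k<K. lam k \<ge> 0" "\<forall>k<K. mu k \<ge> 0"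
  shows "event_driven (state_space K m n) (mp_rate K m n lam mu) (events K) (mp_move K m n)
    (mp_event_rate lam mu)"
  unfolding event_driven_def
proof (intro conjI ballI allI impI)
  fix x e assume x: "x \<in> state_space K m n" and e: "e \<in> events K"
  obtain k where k: "k < K" and "e = Arr k \<or> e = Dep1 k \<or> e = Dep2 k"
    using e by (auto simp: events_iff)
  then show "0 \<le> mp_event_rate lam mu x e" "mp_move K m n x e \<in> state_space K m n"
    using assms x arrival_in_state_space[OF x k] sub1_in_state_space[OF x] sub2_in_state_space[OF x k]
    by auto
next
  fix x x' :: state assume ne: "x' \<noteq> x"
  have departure: "(if x' = sub1 x k \<and> snd x k = 0 then mu k * real (fst x k) else 0)
      + (if x' = sub2 x k
         then (if snd x k > 0 then mu k * real (fst x k) else 0) + mu k * real (snd x k) else 0)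
    = (if x' = mp_move K m n x (Dep1 k) then mp_event_rate lam mu x (Dep1 k) else 0)" for k
    using ne sub2_id[of x k] by (auto simp: algebra_simps)
  show "mp_rate K m n lam mu x x'
      = (\<Sum>e\<in>events K. if x' = mp_move K m n x e then mp_event_rate lam mu x e else 0)"
    unfolding mp_rate_def sum_events using ne arrival_rate_eq[OF ne] departure
    by (simp add: add.assoc cong: if_cong)
qed (rule finite_events)

lemma loss_descent:
  assumes "\<forall>k<K. mu k > 0" and x: "x \<in> state_space K m n" "x \<noteq> empty_state"
  shows "\<exists>e\<in>events K. loss_event_rate lam mu x e > 0 \<and> size_st K (loss_move K m n x e) < size_st K x"
proof -
  obtain k where k: "k < K" "fst x k > 0 \<or> snd x k > 0" using nonempty_state[OF x] by blast
  from k(2) show ?thesis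
  proof
    assume 1: "fst x k > 0"
    then show ?thesis using k assms size_sub1[OF k(1) 1]
      by (intro bexI[of _ "Dep1 k"]) (auto simp: events_iff)
  next
    assume 2: "snd x k > 0"
    then show ?thesis using k assms size_sub2[OF k(1) 2]
      by (intro bexI[of _ "Dep2 k"]) (auto simp: events_iff)
  qed
qed

lemma mp_descent:
  assumes "\<forall>k<K. mu k > 0" and x: "x \<in> state_space K m n" "x \<noteq> empty_state"
  shows "\<exists>e\<in>events K. mp_event_rate lam mu x e > 0 \<and> size_st K (mp_move K m n x e) < size_st K x"
proof -
  obtain k where k: "k < K" "fst x k > 0 \<or> snd x k > 0" using nonempty_state[OF x] by blast
  then have "size_st K (mp_move K m n x (Dep1 k)) < size_st K x"
    using size_sub1[of k K x] size_sub2[of k K x] by auto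
  then show ?thesis using k assms by (intro bexI[of _ "Dep1 k"]) (auto simp: events_iff)
qed

lemma loss_stationary_unique:
  assumes "\<forall>k<K. lam k \<ge> 0" "\<forall>k<K. mu k > 0"
    and "stationary (state_space K m n) (loss_rate K m n lam mu) p1"
    and "stationary (state_space K m n) (loss_rate K m n lam mu) p2"
  shows "\<forall>x\<in>state_space K m n. p1 x = p2 x"
  using assms loss_descent[OF assms(2)]
  by (intro event_driven_stationary_unique[OF loss_event_driven finite_state_space
        empty_state_in_state_space]) (auto simp: less_imp_le)

lemma mp_stationary_unique:
  assumes "\<forall>k<K. lam k \<ge> 0" "\<forall>k<K. mu k > 0"
    and "stationary (state_space K m n) (mp_rate K m n lam mu) p1"
    and "stationary (state_space K m n) (mp_rate K m n lam mu) p2"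
  shows "\<forall>x\<in>state_space K m n. p1 x = p2 x"
  using assms mp_descent[OF assms(2)]
  by (intro event_driven_stationary_unique[OF mp_event_driven finite_state_space
        empty_state_in_state_space]) (auto simp: less_imp_le)

lemma fst_arrival:
  "fst (arrival K m n x k) l = (if l = k \<and> fst x k < m k then fst x k + 1 else fst x l)"
  unfolding arrival_def by auto

lemma size_arrival:
  assumes "x \<in> state_space K m n" "k < K"
  shows "size_st K (arrival K m n x k) = size_st K x + (if x \<in> blocking_set K m n k then 0 else 1)"
  using assms state_space_fst_le[OF assms] state_space_sum_snd_le[OF assms(1)] size_add1 size_add2
  by (auto simp: arrival_def blocking_set_def)

lemma loss_departure:
  assumes x: "x \<in> state_space K m n" and e: "e \<in> events K" "\<forall>k. e \<noteq> Arr k"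
    and nz: "loss_event_rate lam mu x e \<noteq> 0"
  shows "loss_move K m n x e \<in> state_space K m n"
    and "size_st K (loss_move K m n x e) + 1 = size_st K x"
    and "\<forall>k. fst (loss_move K m n x e) k \<le> fst x k"
proof -
  obtain l where l: "l < K" "e = Dep1 l \<or> e = Dep2 l" using e by (auto simp: events_iff)
  then show "loss_move K m n x e \<in> state_space K m n"
    and "size_st K (loss_move K m n x e) + 1 = size_st K x"
    and "\<forall>k. fst (loss_move K m n x e) k \<le> fst x k"
    using nz sub1_in_state_space[OF x] sub2_in_state_space[OF x l(1)]
      size_sub1[OF l(1), of x] size_sub2[OF l(1), of x]
    by (auto intro!: gr0I)
qed

lemma mp_departure:
  assumes y: "y \<in> state_space K m n" and k: "k < K" and nz: "mp_event_rate lam mu y (Dep1 k) \<noteq> 0"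
  shows "mp_move K m n y (Dep1 k) \<in> state_space K m n"
    and "size_st K (mp_move K m n y (Dep1 k)) + 1 = size_st K y"
    and "(\<forall>l<K. fst x l \<le> fst y l) \<Longrightarrow> \<not> (snd y k = 0 \<and> fst x k = fst y k) \<Longrightarrow>
      \<forall>l<K. fst x l \<le> fst (mp_move K m n y (Dep1 k)) l"
proof -
  show "mp_move K m n y (Dep1 k) \<in> state_space K m n"
    using sub1_in_state_space[OF y] sub2_in_state_space[OF y k] by simp
  show "size_st K (mp_move K m n y (Dep1 k)) + 1 = size_st K y"
    using nz size_sub1[OF k, of y] size_sub2[OF k, of y] by (auto intro!: gr0I)
  show "\<forall>l<K. fst x l \<le> fst (mp_move K m n y (Dep1 k)) l"
    if le: "\<forall>l<K. fst x l \<le> fst y l" and nsync: "\<not> (snd y k = 0 \<and> fst x k = fst y k)"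
  proof (intro allI impI)
    fix l assume "l < K"
    show "fst x l \<le> fst (mp_move K m n y (Dep1 k)) l"
    proof (cases "l = k \<and> snd y k = 0")
      case True
      then have "fst x k < fst y k" using le nsync k by (simp add: order_less_le)
      then show ?thesis using True by simp
    next
      case False
      then show ?thesis using le \<open>l < K\<close> by auto
    qed
  qed
qed

section \<open>Class balance and blocking\<close>

lemma stationary_rate_conservation:
  assumes fS: "finite S" and st: "stationary S q p"
    and drift: "\<forall>x\<in>S. (\<Sum>y\<in>S-{x}. q x y * (f y - f x)) = (if x \<in> B then 0 else l) - u * f x"
  shows "l * (1 - (\<Sum>x\<in>S \<inter> B. p x)) = u * (\<Sum>x\<in>S. p x * f x)"
proof -
  have "0 = (\<Sum>x\<in>S. p x * ((if x \<in> B then 0 else l) - u * f x))"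
    using global_balance_drift[OF fS stationary_global_balance[OF st], of f] drift by simp
  also have "\<dots> = (\<Sum>x\<in>S. p x * (if x \<in> B then 0 else l)) - u * (\<Sum>x\<in>S. p x * f x)"
    by (simp add: right_diff_distrib sum_subtractf sum_distrib_left mult_ac)
  also have "(\<Sum>x\<in>S. p x * (if x \<in> B then 0 else l)) = l * (\<Sum>x\<in>S - B. p x)"
    unfolding sum_distrib_left using fS by (intro sum.mono_neutral_cong_right) auto
  also have "(\<Sum>x\<in>S - B. p x) = 1 - (\<Sum>x\<in>S \<inter> B. p x)"
    using sum.Int_Diff[OF fS, of p B] st unfolding stationary_def by linarith
  finally show ?thesis by simp
qed

lemma arrival_occupancy:
  assumes x: "x \<in> state_space K m n" and k: "k < K"
  shows "fst (arrival K m n x k) l + snd (arrival K m n x k) l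
    = fst x l + snd x l + (if l = k \<and> x \<notin> blocking_set K m n k then 1 else 0)"
  using state_space_fst_le[OF x k] state_space_sum_snd_le[OF x]
  by (auto simp: arrival_def blocking_set_def)

lemma drift_occupancy:
  assumes x: "x \<in> state_space K m n" and k0: "k0 < K"
    and arr: "\<And>k. move x (Arr k) = arrival K m n x k" "\<And>k. rate x (Arr k) = lam k"
    and dep_other: "\<And>k e. k \<noteq> k0 \<Longrightarrow> e = Dep1 k \<or> e = Dep2 k \<Longrightarrow>
      fst (move x e) k0 + snd (move x e) k0 = fst x k0 + snd x k0"
    and dep_own: "rate x (Dep1 k0) * (real (fst (move x (Dep1 k0)) k0 + snd (move x (Dep1 k0)) k0)
          - real (fst x k0 + snd x k0))
      + rate x (Dep2 k0) * (real (fst (move x (Dep2 k0)) k0 + snd (move x (Dep2 k0)) k0)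
          - real (fst x k0 + snd x k0))
      = - mu k0 * real (fst x k0 + snd x k0)"
  shows "(\<Sum>e\<in>events K. rate x e
      * (real (fst (move x e) k0 + snd (move x e) k0) - real (fst x k0 + snd x k0)))
    = (if x \<in> blocking_set K m n k0 then 0 else lam k0) - mu k0 * real (fst x k0 + snd x k0)"
proof -
  let ?d = "\<lambda>e. rate x e * (real (fst (move x e) k0 + snd (move x e) k0) - real (fst x k0 + snd x k0))"
  let ?c = "(if x \<in> blocking_set K m n k0 then 0 else lam k0) - mu k0 * real (fst x k0 + snd x k0)"
  have per_class: "?d (Arr k) + ?d (Dep1 k) + ?d (Dep2 k) = (if k = k0 then ?c else 0)" if "k < K" for k
  proof (cases "k = k0")
    case True
    then show ?thesis
      using arrival_occupancy[OF x that, of k0] dep_own arr by (simp add: algebra_simps)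
  next
    case False
    have "?d (Arr k) = 0" "?d (Dep1 k) = 0" "?d (Dep2 k) = 0"
      using dep_other[OF False] arrival_occupancy[OF x that, of k0] arr False by auto
    then show ?thesis using False by (simp only: add_0_right if_False simp_thms)
  qed
  have "(\<Sum>e\<in>events K. ?d e) = (\<Sum>k<K. ?d (Arr k) + ?d (Dep1 k) + ?d (Dep2 k))"
    by (rule sum_events)
  also have "\<dots> = (\<Sum>k<K. if k = k0 then ?c else 0)"
    using per_class by (intro sum.cong) auto
  finally show ?thesis using k0 by simp
qed

lemma loss_class_balance:
  assumes st: "stationary (state_space K m n) (loss_rate K m n lam mu) p"
    and lam: "\<forall>k<K. lam k \<ge> 0" and mu: "\<forall>k<K. mu k \<ge> 0" and k0: "k0 < K"
  shows "lam k0 * (1 - (\<Sum>x\<in>state_space K m n \<inter> blocking_set K m n k0. p x))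
    = mu k0 * mean_k (state_space K m n) p k0"
  unfolding mean_k_def
proof (rule stationary_rate_conservation[OF finite_state_space st], intro ballI)
  fix x assume x: "x \<in> state_space K m n"
  have own: "loss_event_rate lam mu x (Dep1 k0) * (real (fst (loss_move K m n x (Dep1 k0)) k0
        + snd (loss_move K m n x (Dep1 k0)) k0) - real (fst x k0 + snd x k0))
      + loss_event_rate lam mu x (Dep2 k0) * (real (fst (loss_move K m n x (Dep2 k0)) k0
        + snd (loss_move K m n x (Dep2 k0)) k0) - real (fst x k0 + snd x k0))
    = - mu k0 * real (fst x k0 + snd x k0)"
    by (cases "fst x k0"; cases "snd x k0") (auto simp: algebra_simps)
  have "(\<Sum>e\<in>events K. loss_event_rate lam mu x e
        * (real (fst (loss_move K m n x e) k0 + snd (loss_move K m n x e) k0)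
           - real (fst x k0 + snd x k0)))
      = (if x \<in> blocking_set K m n k0 then 0 else lam k0) - mu k0 * real (fst x k0 + snd x k0)"
    by (rule drift_occupancy[where move="loss_move K m n" and rate="loss_event_rate lam mu"
          and mu=mu and lam=lam,
        OF x k0 _ _ _ own]) auto
  then show "(\<Sum>y\<in>state_space K m n - {x}. loss_rate K m n lam mu x y
        * (real (fst y k0 + snd y k0) - real (fst x k0 + snd x k0)))
      = (if x \<in> blocking_set K m n k0 then 0 else lam k0) - mu k0 * real (fst x k0 + snd x k0)"
    using event_driven_drift[OF loss_event_driven[OF lam mu] finite_state_space x,
        where f="\<lambda>y. real (fst y k0 + snd y k0)"]
    by simp
qed

lemma mp_class_balance:
  assumes st: "stationary (state_space K m n) (mp_rate K m n lam mu) p"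
    and lam: "\<forall>k<K. lam k \<ge> 0" and mu: "\<forall>k<K. mu k \<ge> 0" and k0: "k0 < K"
  shows "lam k0 * (1 - (\<Sum>x\<in>state_space K m n \<inter> blocking_set K m n k0. p x))
    = mu k0 * mean_k (state_space K m n) p k0"
  unfolding mean_k_def
proof (rule stationary_rate_conservation[OF finite_state_space st], intro ballI)
  fix x assume x: "x \<in> state_space K m n"
  have own: "mp_event_rate lam mu x (Dep1 k0) * (real (fst (mp_move K m n x (Dep1 k0)) k0
        + snd (mp_move K m n x (Dep1 k0)) k0) - real (fst x k0 + snd x k0))
      + mp_event_rate lam mu x (Dep2 k0) * (real (fst (mp_move K m n x (Dep2 k0)) k0
        + snd (mp_move K m n x (Dep2 k0)) k0) - real (fst x k0 + snd x k0))
    = - mu k0 * real (fst x k0 + snd x k0)"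
    by (cases "fst x k0"; cases "snd x k0") (auto simp: algebra_simps)
  have "(\<Sum>e\<in>events K. mp_event_rate lam mu x e
        * (real (fst (mp_move K m n x e) k0 + snd (mp_move K m n x e) k0) - real (fst x k0 + snd x k0)))
      = (if x \<in> blocking_set K m n k0 then 0 else lam k0) - mu k0 * real (fst x k0 + snd x k0)"
    by (rule drift_occupancy[where move="mp_move K m n" and rate="mp_event_rate lam mu"
          and mu=mu and lam=lam,
        OF x k0 _ _ _ own]) auto
  then show "(\<Sum>y\<in>state_space K m n - {x}. mp_rate K m n lam mu x y
        * (real (fst y k0 + snd y k0) - real (fst x k0 + snd x k0)))
      = (if x \<in> blocking_set K m n k0 then 0 else lam k0) - mu k0 * real (fst x k0 + snd x k0)"
    using event_driven_drift[OF mp_event_driven[OF lam mu] finite_state_space x,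
        where f="\<lambda>y. real (fst y k0 + snd y k0)"]
    by simp
qed

lemma blocking_eq_throughput:
  assumes balance: "\<forall>k<K. lam k * (1 - (\<Sum>x\<in>S \<inter> blocking_set K m n k. p x)) = mu k * mean_k S p k"
    and pos: "(\<Sum>k<K. lam k) > 0"
  shows "blocking K m n lam S p = 1 - throughput K mu S p / (\<Sum>k<K. lam k)"
proof -
  have "(\<Sum>k<K. lam k * (\<Sum>x\<in>S \<inter> blocking_set K m n k. p x)) = (\<Sum>k<K. lam k - mu k * mean_k S p k)"
    using balance by (intro sum.cong refl) (auto simp: algebra_simps)
  then show ?thesis
    unfolding blocking_def throughput_def using pos by (simp add: sum_subtractf field_simps)
qed

lemma loss_blocking:
  assumes "stationary (state_space K m n) (loss_rate K m n lam mu) p"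
    and "\<forall>k<K. lam k \<ge> 0" "\<forall>k<K. mu k \<ge> 0" "(\<Sum>k<K. lam k) > 0"
  shows "blocking K m n lam (state_space K m n) p
    = 1 - throughput K mu (state_space K m n) p / (\<Sum>k<K. lam k)"
  using assms by (intro blocking_eq_throughput) (auto intro: loss_class_balance)

lemma mp_blocking:
  assumes "stationary (state_space K m n) (mp_rate K m n lam mu) p"
    and "\<forall>k<K. lam k \<ge> 0" "\<forall>k<K. mu k \<ge> 0" "(\<Sum>k<K. lam k) > 0"
  shows "blocking K m n lam (state_space K m n) p
    = 1 - throughput K mu (state_space K m n) p / (\<Sum>k<K. lam k)"
  using assms by (intro blocking_eq_throughput) (auto intro: mp_class_balance)

lemma throughput_const: "throughput K (\<lambda>_. c) S p = c * mean_total K S p"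
  unfolding throughput_def mean_total_def by (simp add: sum_distrib_left)

lemma throughput_bounds:
  assumes "\<forall>x\<in>S. p x \<ge> 0" "\<forall>k<K. a \<le> mu k \<and> mu k \<le> b"
  shows "a * mean_total K S p \<le> throughput K mu S p" "throughput K mu S p \<le> b * mean_total K S p"
proof -
  have "mean_k S p k \<ge> 0" for k unfolding mean_k_def using assms(1) by (auto intro: sum_nonneg)
  then show "a * mean_total K S p \<le> throughput K mu S p" "throughput K mu S p \<le> b * mean_total K S p"
    using assms(2) unfolding throughput_def mean_total_def sum_distrib_left
    by (auto intro!: sum_mono mult_right_mono)
qed

section \<open>Loss system versus maximum packing\<close>

definition same_size :: "nat \<Rightarrow> state \<Rightarrow> state \<Rightarrow> bool" where
  "same_size K x y \<longleftrightarrow> size_st K x = size_st K y"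

definition loss_below_mp :: "nat \<Rightarrow> (nat \<Rightarrow> nat) \<Rightarrow> nat \<Rightarrow> (state \<times> state) set" where
  "loss_below_mp K m n = {(x, y). x \<in> state_space K m n \<and> y \<in> state_space K m n \<and>
     (\<forall>k<K. fst x k \<le> fst y k) \<and> size_st K x \<le> size_st K y}"

text \<open>Besides arrivals, only the departures that could break \<open>x\<^sub>1 \<le> y\<^sub>1\<close> are synchronised: those of
  a class whose layer-1 counts agree, when the maximum packing departure leaves layer 1.\<close>

definition loss_mp_sync :: "state \<Rightarrow> state \<Rightarrow> event \<Rightarrow> bool" where
  "loss_mp_sync x y e = (case e of Arr k \<Rightarrow> True
     | Dep1 k \<Rightarrow> snd y k = 0 \<and> fst x k = fst y k | Dep2 k \<Rightarrow> False)"

lemma size_lt_if_blocked: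
  assumes x: "x \<in> state_space K m n" and y: "y \<in> state_space K m n" and k: "k < K"
    and le: "\<forall>l<K. fst x l \<le> fst y l"
    and "y \<in> blocking_set K m n k" "x \<notin> blocking_set K m n k"
  shows "size_st K x < size_st K y"
proof -
  have sum_fst: "(\<Sum>l<K. fst x l) \<le> (\<Sum>l<K. fst y l)" using le by (intro sum_mono) auto
  have "fst x k < fst y k \<or> (\<Sum>l<K. snd x l) < (\<Sum>l<K. snd y l)"
    using assms state_space_fst_le[OF x k] state_space_sum_snd_le[OF x]
    by (auto simp: blocking_set_def)
  then show ?thesis
  proof
    assume "fst x k < fst y k"
    then have "(\<Sum>l<K. fst x l) < (\<Sum>l<K. fst y l)"
      using le k by (intro sum_strict_mono_ex1) auto
    then show ?thesis
      using assms state_space_sum_snd_le[OF x] by (simp add: size_st_eq blocking_set_def)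
  qed (use sum_fst in \<open>simp add: size_st_eq\<close>)
qed

lemma arrival_loss_below_mp:
  assumes xy: "(x, y) \<in> loss_below_mp K m n" and k: "k < K"
  shows "(arrival K m n x k, arrival K m n y k) \<in> loss_below_mp K m n"
proof -
  have x: "x \<in> state_space K m n" and y: "y \<in> state_space K m n"
    and le: "\<forall>l<K. fst x l \<le> fst y l" and sz: "size_st K x \<le> size_st K y"
    using xy by (auto simp: loss_below_mp_def)
  have "fst (arrival K m n x k) l \<le> fst (arrival K m n y k) l" if "l < K" for l
    using le that state_space_fst_le[OF x k] by (auto simp: fst_arrival)
  moreover have "size_st K (arrival K m n x k) \<le> size_st K (arrival K m n y k)"
    using size_lt_if_blocked[OF x y k le] sz
    by (auto simp: size_arrival[OF x k] size_arrival[OF y k])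
  ultimately show ?thesis
    using arrival_in_state_space[OF x k] arrival_in_state_space[OF y k]
    by (simp add: loss_below_mp_def)
qed

context
  fixes K :: nat and m :: "nat \<Rightarrow> nat" and n :: nat and lam mu :: "nat \<Rightarrow> real" and \<nu> :: real
  assumes lam: "\<forall>k<K. lam k \<ge> 0" and mu: "\<forall>k<K. \<nu> \<le> mu k" and nu: "\<nu> > 0"
begin

lemma loss_mp_sync_rate_le:
  assumes "e \<in> events K" "loss_mp_sync x y e"
  shows "mp_event_rate lam (\<lambda>_. \<nu>) y e \<le> loss_event_rate lam mu x e"
  using assms mu by (cases e) (auto simp: loss_mp_sync_def events_iff intro: mult_right_mono)

lemma loss_mp_total_rate_le:
  assumes "same_size K x y"
  shows "(\<Sum>e\<in>events K. mp_event_rate lam (\<lambda>_. \<nu>) y e) \<le> (\<Sum>e\<in>events K. loss_event_rate lam mu x e)"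
proof -
  have "(\<Sum>e\<in>events K. mp_event_rate lam (\<lambda>_. \<nu>) y e) = (\<Sum>k<K. lam k) + \<nu> * real (size_st K y)"
    by (simp add: sum_events size_st_def sum.distrib sum_distrib_left distrib_left)
  also have "\<dots> = (\<Sum>k<K. lam k) + \<nu> * real (size_st K x)"
    using assms by (simp add: same_size_def)
  also have "\<dots> = (\<Sum>k<K. lam k + \<nu> * real (fst x k) + \<nu> * real (snd x k))"
    by (simp add: size_st_def sum.distrib sum_distrib_left distrib_left)
  also have "\<dots> \<le> (\<Sum>k<K. lam k + mu k * real (fst x k) + mu k * real (snd x k))"
    using mu by (intro sum_mono add_mono mult_right_mono) auto
  also have "\<dots> = (\<Sum>e\<in>events K. loss_event_rate lam mu x e)" by (simp add: sum_events)
  finally show ?thesis .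
qed

lemma loss_mp_residual_departure:
  assumes "e \<in> events K"
    and "residual_rate (loss_event_rate lam mu x) (mp_event_rate lam (\<lambda>_. \<nu>) y) (loss_mp_sync x y) e \<noteq> 0"
  shows "loss_event_rate lam mu x e \<noteq> 0" "\<forall>k. e \<noteq> Arr k"
proof -
  have "mp_event_rate lam (\<lambda>_. \<nu>) y e \<ge> 0" using assms(1) lam nu by (auto simp: events_iff)
  note nz = residual_rate_nonzero[OF assms(2) _ this]
  show "loss_event_rate lam mu x e \<noteq> 0" using nz(1) loss_mp_sync_rate_le[OF assms(1)] by blast
  show "\<forall>k. e \<noteq> Arr k" using nz(2) by (auto simp: loss_mp_sync_def)
qed

lemma loss_mp_unsynced:
  assumes "j \<in> events K" "\<not> loss_mp_sync x y j" "mp_event_rate lam (\<lambda>_. \<nu>) y j \<noteq> 0"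
  obtains k where "k < K" "j = Dep1 k" "\<not> (snd y k = 0 \<and> fst x k = fst y k)"
  using assms by (cases j) (auto simp: loss_mp_sync_def events_iff)

lemma loss_mp_step_sync:
  assumes xy: "(x, y) \<in> loss_below_mp K m n" and e: "e \<in> events K" and sync: "loss_mp_sync x y e"
    and nz: "mp_event_rate lam (\<lambda>_. \<nu>) y e \<noteq> 0"
  shows "(loss_move K m n x e, mp_move K m n y e) \<in> loss_below_mp K m n"
proof -
  obtain k where k: "k < K" "e = Arr k \<or> e = Dep1 k"
    using e sync by (cases e) (auto simp: events_iff loss_mp_sync_def)
  show ?thesis
  proof (cases "e = Arr k")
    case True
    then show ?thesis using arrival_loss_below_mp[OF xy k(1)] by simp
  next
    case False
    then have e: "e = Dep1 k" and c: "snd y k = 0" "fst x k = fst y k"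
      using k sync by (auto simp: loss_mp_sync_def)
    then have "fst y k > 0" using nz by (auto intro!: gr0I)
    then show ?thesis
      using xy e c sub1_in_state_space size_sub1[OF k(1), of x] size_sub1[OF k(1), of y]
      by (auto simp: loss_below_mp_def)
  qed
qed

lemma loss_mp_step_matched:
  assumes xy: "(x, y) \<in> loss_below_mp K m n" and i: "i \<in> events K" and j: "j \<in> events K"
    and nsync: "\<not> loss_mp_sync x y j" and same: "same_size K x y"
    and nz: "mp_event_rate lam (\<lambda>_. \<nu>) y j \<noteq> 0"
    and res: "residual_rate (loss_event_rate lam mu x) (mp_event_rate lam (\<lambda>_. \<nu>) y)
      (loss_mp_sync x y) i \<noteq> 0"
  shows "(loss_move K m n x i, mp_move K m n y j) \<in> loss_below_mp K m n"
proof -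
  have x: "x \<in> state_space K m n" and y: "y \<in> state_space K m n" and le: "\<forall>l<K. fst x l \<le> fst y l"
    using xy by (auto simp: loss_below_mp_def)
  obtain k where k: "k < K" "j = Dep1 k" "\<not> (snd y k = 0 \<and> fst x k = fst y k)"
    using loss_mp_unsynced[OF j nsync nz] .
  note dx = loss_departure[OF x i loss_mp_residual_departure(2,1)[OF i res]]
  note dy = mp_departure[OF y k(1) nz[unfolded k(2)]]
  have "\<forall>l<K. fst (loss_move K m n x i) l \<le> fst (mp_move K m n y j) l"
    using dx(3) dy(3)[OF le k(3)] k(2) order_trans by blast
  moreover have "size_st K (loss_move K m n x i) \<le> size_st K (mp_move K m n y j)"
    using dx(2) dy(2) same k(2) by (simp add: same_size_def)
  ultimately show ?thesis using dx(1) dy(1) k(2) by (simp add: loss_below_mp_def)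
qed

lemma loss_mp_step_fst:
  assumes xy: "(x, y) \<in> loss_below_mp K m n" and i: "i \<in> events K"
    and res: "residual_rate (loss_event_rate lam mu x) (mp_event_rate lam (\<lambda>_. \<nu>) y)
      (loss_mp_sync x y) i \<noteq> 0"
  shows "(loss_move K m n x i, y) \<in> loss_below_mp K m n"
proof -
  have x: "x \<in> state_space K m n" and le: "\<forall>l<K. fst x l \<le> fst y l"
    and sz: "size_st K x \<le> size_st K y"
    using xy by (auto simp: loss_below_mp_def)
  note dx = loss_departure[OF x i loss_mp_residual_departure(2,1)[OF i res]]
  have "\<forall>l<K. fst (loss_move K m n x i) l \<le> fst y l" using dx(3) le order_trans by blast
  then show ?thesis using xy dx(1,2) sz by (simp add: loss_below_mp_def)
qed

lemma loss_mp_step_snd: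
  assumes xy: "(x, y) \<in> loss_below_mp K m n" and j: "j \<in> events K"
    and nsync: "\<not> loss_mp_sync x y j" and nsame: "\<not> same_size K x y"
    and nz: "mp_event_rate lam (\<lambda>_. \<nu>) y j \<noteq> 0"
  shows "(x, mp_move K m n y j) \<in> loss_below_mp K m n"
proof -
  have y: "y \<in> state_space K m n" and le: "\<forall>l<K. fst x l \<le> fst y l"
    using xy by (auto simp: loss_below_mp_def)
  obtain k where k: "k < K" "j = Dep1 k" "\<not> (snd y k = 0 \<and> fst x k = fst y k)"
    using loss_mp_unsynced[OF j nsync nz] .
  note dy = mp_departure[OF y k(1) nz[unfolded k(2)]]
  show ?thesis
    using xy dy(1,2) dy(3)[OF le k(3)] nsame k(2) by (auto simp: loss_below_mp_def same_size_def)
qed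

lemma loss_mp_coupling:
  "\<exists>\<rho>. (\<forall>s\<in>loss_below_mp K m n. \<rho> s \<ge> 0)
     \<and> stationary (state_space K m n) (loss_rate K m n lam mu)
         (\<lambda>x. \<Sum>s\<in>{s\<in>loss_below_mp K m n. fst s = x}. \<rho> s)
     \<and> stationary (state_space K m n) (mp_rate K m n lam (\<lambda>_. \<nu>))
         (\<lambda>y. \<Sum>s\<in>{s\<in>loss_below_mp K m n. snd s = y}. \<rho> s)"
proof (rule coupling_exists[where D = loss_mp_sync and t = "same_size K"])
  show "event_driven (state_space K m n) (loss_rate K m n lam mu) (events K) (loss_move K m n)
      (loss_event_rate lam mu)"
    using lam mu nu by (intro loss_event_driven) (auto intro: order_trans[of 0 \<nu>])
  show "event_driven (state_space K m n) (mp_rate K m n lam (\<lambda>_. \<nu>)) (events K) (mp_move K m n)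
      (mp_event_rate lam (\<lambda>_. \<nu>))"
    using lam nu by (intro mp_event_driven) auto
  show "loss_below_mp K m n \<subseteq> state_space K m n \<times> state_space K m n"
    by (auto simp: loss_below_mp_def)
  have "(empty_state, empty_state) \<in> loss_below_mp K m n"
    using empty_state_in_state_space by (simp add: loss_below_mp_def)
  then show "loss_below_mp K m n \<noteq> {}" by blast
qed (rule finite_state_space loss_mp_sync_rate_le loss_mp_total_rate_le loss_mp_step_sync
    loss_mp_step_matched loss_mp_step_fst loss_mp_step_snd; assumption)+

lemma loss_size_le_mp:
  assumes p: "stationary (state_space K m n) (loss_rate K m n lam mu) p"
    and pmp: "stationary (state_space K m n) (mp_rate K m n lam (\<lambda>_. \<nu>)) pmp"
  shows "size_st_le K (state_space K m n) p (state_space K m n) pmp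
    \<and> mean_total K (state_space K m n) p \<le> mean_total K (state_space K m n) pmp"
proof -
  obtain \<rho> where \<rho>: "\<forall>s\<in>loss_below_mp K m n. \<rho> s \<ge> 0"
    "stationary (state_space K m n) (loss_rate K m n lam mu)
       (\<lambda>x. \<Sum>s\<in>{s\<in>loss_below_mp K m n. fst s = x}. \<rho> s)"
    "stationary (state_space K m n) (mp_rate K m n lam (\<lambda>_. \<nu>))
       (\<lambda>y. \<Sum>s\<in>{s\<in>loss_below_mp K m n. snd s = y}. \<rho> s)"
    using loss_mp_coupling by blast
  have "\<forall>k<K. mu k > 0" using mu nu by (auto intro: less_le_trans)
  from loss_stationary_unique[OF lam this p \<rho>(2)] mp_stationary_unique[OF lam _ pmp \<rho>(3)]
  show ?thesis
    using nu by (intro coupling_size_st_le[OF finite_state_space finite_state_space _ \<rho>(1)])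
      (auto simp: loss_below_mp_def)
qed

end

section \<open>Dedicated servers versus the loss system\<close>

definition dedicated_below_loss ::
  "nat \<Rightarrow> (nat \<Rightarrow> nat) \<Rightarrow> (nat \<Rightarrow> nat) \<Rightarrow> nat \<Rightarrow> (state \<times> state) set" where
  "dedicated_below_loss K m' m n = {(x, y). x \<in> state_space K m' 0 \<and> y \<in> state_space K m n \<and>
     (\<forall>k<K. fst x k \<le> fst y k + (m' k - m k)) \<and> size_st K x \<le> size_st K y}"

text \<open>The invariant \<open>x\<^sub>k \<le> y\<^sub>1\<^sub>k + (m'\<^sub>k - m\<^sub>k)\<close> is kept by synchronising a layer-1 departure of
  the loss system with a departure of the same class in the dedicated system whenever it is tight.\<close>

definition dedicated_loss_sync :: "(nat \<Rightarrow> nat) \<Rightarrow> (nat \<Rightarrow> nat) \<Rightarrow> state \<Rightarrow> state \<Rightarrow> event \<Rightarrow> bool" where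
  "dedicated_loss_sync m' m x y e = (case e of Arr k \<Rightarrow> True
     | Dep1 k \<Rightarrow> fst x k = fst y k + (m' k - m k) | Dep2 k \<Rightarrow> False)"

context
  fixes K :: nat and m' m :: "nat \<Rightarrow> nat" and n :: nat and lam mu :: "nat \<Rightarrow> real" and M :: real
  assumes lam: "\<forall>k<K. lam k \<ge> 0" and mu: "\<forall>k<K. 0 < mu k \<and> mu k \<le> M"
    and m': "m' \<in> C_set K m n"
begin

lemma extra_servers: "\<forall>k<K. m k \<le> m' k" "(\<Sum>k<K. m' k - m k) = n"
proof -
  show le: "\<forall>k<K. m k \<le> m' k" using m' by (simp add: C_set_def)
  have "(\<Sum>k<K. m' k) = (\<Sum>k<K. m k + (m' k - m k))" using le by (intro sum.cong) auto
  then show "(\<Sum>k<K. m' k - m k) = n" using m' by (simp add: C_set_def sum.distrib)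
qed

lemma arrival_dedicated_below_loss:
  assumes xy: "(x, y) \<in> dedicated_below_loss K m' m n" and k: "k < K"
  shows "(arrival K m' 0 x k, arrival K m n y k) \<in> dedicated_below_loss K m' m n"
proof -
  have x: "x \<in> state_space K m' 0" and y: "y \<in> state_space K m n"
    and le: "\<forall>l<K. fst x l \<le> fst y l + (m' l - m l)" and sz: "size_st K x \<le> size_st K y"
    using xy by (auto simp: dedicated_below_loss_def)
  have "fst (arrival K m' 0 x k) l \<le> fst (arrival K m n y k) l + (m' l - m l)" if "l < K" for l
    using le[rule_format, OF that] le[rule_format, OF k] extra_servers(1)[rule_format, OF k]
      state_space_fst_le[OF x k] state_space_fst_le[OF y k]
    by (auto simp: fst_arrival)
  moreover have "size_st K x < size_st K y"
    if "y \<in> blocking_set K m n k" "x \<notin> blocking_set K m' 0 k"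
  proof -
    have "fst x k < fst y k + (m' k - m k)"
      using that state_space_fst_le[OF x k] state_space_sum_snd_le[OF x] extra_servers(1) k
      by (auto simp: blocking_set_def)
    then have "(\<Sum>l<K. fst x l) < (\<Sum>l<K. fst y l + (m' l - m l))"
      using le k by (intro sum_strict_mono_ex1) auto
    then show ?thesis
      using that(1) extra_servers(2) state_space_sum_snd_le[OF x]
      by (simp add: size_st_eq sum.distrib blocking_set_def)
  qed
  then have "size_st K (arrival K m' 0 x k) \<le> size_st K (arrival K m n y k)"
    using sz by (auto simp: size_arrival[OF x k] size_arrival[OF y k])
  ultimately show ?thesis
    using arrival_in_state_space[OF x k] arrival_in_state_space[OF y k]
    by (simp add: dedicated_below_loss_def)
qed

lemma dedicated_loss_sync_rate_le:
  assumes "e \<in> events K" "dedicated_loss_sync m' m x y e"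
  shows "loss_event_rate lam mu y e \<le> loss_event_rate lam (\<lambda>_. M) x e"
proof (cases e)
  case (Dep1 k)
  then have "k < K" "fst y k \<le> fst x k" using assms by (auto simp: events_iff dedicated_loss_sync_def)
  then have "mu k * real (fst y k) \<le> M * real (fst x k)"
    using mu by (intro mult_mono) (auto intro: order_trans[of 0 "mu k"])
  then show ?thesis using Dep1 by simp
qed (use assms in \<open>auto simp: dedicated_loss_sync_def\<close>)

lemma dedicated_loss_total_rate_le:
  assumes "same_size K x y"
  shows "(\<Sum>e\<in>events K. loss_event_rate lam mu y e) \<le> (\<Sum>e\<in>events K. loss_event_rate lam (\<lambda>_. M) x e)"
proof -
  have "(\<Sum>e\<in>events K. loss_event_rate lam mu y e)
      = (\<Sum>k<K. lam k + mu k * real (fst y k) + mu k * real (snd y k))"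
    by (simp add: sum_events)
  also have "\<dots> \<le> (\<Sum>k<K. lam k + M * real (fst y k) + M * real (snd y k))"
    using mu by (intro sum_mono add_mono mult_right_mono) auto
  also have "\<dots> = (\<Sum>k<K. lam k) + M * real (size_st K y)"
    by (simp add: size_st_def sum.distrib sum_distrib_left distrib_left)
  also have "\<dots> = (\<Sum>k<K. lam k) + M * real (size_st K x)"
    using assms by (simp add: same_size_def)
  also have "\<dots> = (\<Sum>e\<in>events K. loss_event_rate lam (\<lambda>_. M) x e)"
    by (simp add: sum_events size_st_def sum.distrib sum_distrib_left distrib_left)
  finally show ?thesis .
qed

lemma dedicated_loss_residual_departure:
  assumes "e \<in> events K"
    and "residual_rate (loss_event_rate lam (\<lambda>_. M) x) (loss_event_rate lam mu y)
      (dedicated_loss_sync m' m x y) e \<noteq> 0"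
  shows "loss_event_rate lam (\<lambda>_. M) x e \<noteq> 0" "\<forall>k. e \<noteq> Arr k"
proof -
  have "loss_event_rate lam mu y e \<ge> 0" using assms(1) lam mu by (auto simp: events_iff less_imp_le)
  note nz = residual_rate_nonzero[OF assms(2) _ this]
  show "loss_event_rate lam (\<lambda>_. M) x e \<noteq> 0"
    using nz(1) dedicated_loss_sync_rate_le[OF assms(1)] by blast
  show "\<forall>k. e \<noteq> Arr k" using nz(2) by (auto simp: dedicated_loss_sync_def)
qed

lemma dedicated_loss_unsynced:
  assumes y: "y \<in> state_space K m n" and j: "j \<in> events K" and nsync: "\<not> dedicated_loss_sync m' m x y j"
    and nz: "loss_event_rate lam mu y j \<noteq> 0" and le: "\<forall>l<K. fst x l \<le> fst y l + (m' l - m l)"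
  shows "\<forall>l<K. fst x l \<le> fst (loss_move K m n y j) l + (m' l - m l)"
proof (cases j)
  case (Dep1 k)
  then have pos: "fst y k > 0" and tight: "fst x k \<noteq> fst y k + (m' k - m k)"
    using nz nsync by (auto simp: dedicated_loss_sync_def intro!: gr0I)
  show ?thesis
  proof (intro allI impI)
    fix l assume l: "l < K"
    show "fst x l \<le> fst (loss_move K m n y j) l + (m' l - m l)"
    proof (cases "l = k")
      case True
      then have "fst x k < fst y k + (m' k - m k)" using le l tight by (simp add: order_less_le)
      then show ?thesis using True Dep1 pos by simp
    next
      case False
      then show ?thesis using le l Dep1 by simp
    qed
  qed
qed (use nsync le in \<open>simp_all add: dedicated_loss_sync_def\<close>)

lemma dedicated_loss_step_sync:
  assumes xy: "(x, y) \<in> dedicated_below_loss K m' m n" and e: "e \<in> events K"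
    and sync: "dedicated_loss_sync m' m x y e" and nz: "loss_event_rate lam mu y e \<noteq> 0"
  shows "(loss_move K m' 0 x e, loss_move K m n y e) \<in> dedicated_below_loss K m' m n"
proof -
  obtain k where k: "k < K" "e = Arr k \<or> e = Dep1 k"
    using e sync by (cases e) (auto simp: events_iff dedicated_loss_sync_def)
  show ?thesis
  proof (cases "e = Arr k")
    case True
    then show ?thesis using arrival_dedicated_below_loss[OF xy k(1)] by simp
  next
    case False
    then have e: "e = Dep1 k" and tight: "fst x k = fst y k + (m' k - m k)"
      using k sync by (auto simp: dedicated_loss_sync_def)
    then have "fst y k > 0" "fst x k > 0" using nz by (auto intro!: gr0I)
    then show ?thesis
      using xy e tight sub1_in_state_space size_sub1[OF k(1), of x] size_sub1[OF k(1), of y]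
      by (auto simp: dedicated_below_loss_def)
  qed
qed

lemma dedicated_loss_step_matched:
  assumes xy: "(x, y) \<in> dedicated_below_loss K m' m n" and i: "i \<in> events K" and j: "j \<in> events K"
    and nsync: "\<not> dedicated_loss_sync m' m x y j" and same: "same_size K x y"
    and nz: "loss_event_rate lam mu y j \<noteq> 0"
    and res: "residual_rate (loss_event_rate lam (\<lambda>_. M) x) (loss_event_rate lam mu y)
      (dedicated_loss_sync m' m x y) i \<noteq> 0"
  shows "(loss_move K m' 0 x i, loss_move K m n y j) \<in> dedicated_below_loss K m' m n"
proof -
  have x: "x \<in> state_space K m' 0" and y: "y \<in> state_space K m n"
    and le: "\<forall>l<K. fst x l \<le> fst y l + (m' l - m l)"
    using xy by (auto simp: dedicated_below_loss_def)
  have "\<forall>k. j \<noteq> Arr k" using nsync by (auto simp: dedicated_loss_sync_def)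
  note dx = loss_departure[OF x i dedicated_loss_residual_departure(2,1)[OF i res]]
  note dy = loss_departure[OF y j \<open>\<forall>k. j \<noteq> Arr k\<close> nz]
  have "\<forall>l<K. fst (loss_move K m' 0 x i) l \<le> fst (loss_move K m n y j) l + (m' l - m l)"
    using dx(3) dedicated_loss_unsynced[OF y j nsync nz le] order_trans by blast
  moreover have "size_st K (loss_move K m' 0 x i) \<le> size_st K (loss_move K m n y j)"
    using dx(2) dy(2) same by (simp add: same_size_def)
  ultimately show ?thesis using dx(1) dy(1) by (simp add: dedicated_below_loss_def)
qed

lemma dedicated_loss_step_fst:
  assumes xy: "(x, y) \<in> dedicated_below_loss K m' m n" and i: "i \<in> events K"
    and res: "residual_rate (loss_event_rate lam (\<lambda>_. M) x) (loss_event_rate lam mu y)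
      (dedicated_loss_sync m' m x y) i \<noteq> 0"
  shows "(loss_move K m' 0 x i, y) \<in> dedicated_below_loss K m' m n"
proof -
  have x: "x \<in> state_space K m' 0" and le: "\<forall>l<K. fst x l \<le> fst y l + (m' l - m l)"
    and sz: "size_st K x \<le> size_st K y"
    using xy by (auto simp: dedicated_below_loss_def)
  note dx = loss_departure[OF x i dedicated_loss_residual_departure(2,1)[OF i res]]
  have "\<forall>l<K. fst (loss_move K m' 0 x i) l \<le> fst y l + (m' l - m l)" using dx(3) le order_trans by blast
  then show ?thesis using xy dx(1,2) sz by (simp add: dedicated_below_loss_def)
qed

lemma dedicated_loss_step_snd:
  assumes xy: "(x, y) \<in> dedicated_below_loss K m' m n" and j: "j \<in> events K"
    and nsync: "\<not> dedicated_loss_sync m' m x y j" and nsame: "\<not> same_size K x y"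
    and nz: "loss_event_rate lam mu y j \<noteq> 0"
  shows "(x, loss_move K m n y j) \<in> dedicated_below_loss K m' m n"
proof -
  have y: "y \<in> state_space K m n" and le: "\<forall>l<K. fst x l \<le> fst y l + (m' l - m l)"
    using xy by (auto simp: dedicated_below_loss_def)
  have "\<forall>k. j \<noteq> Arr k" using nsync by (auto simp: dedicated_loss_sync_def)
  note dy = loss_departure[OF y j this nz]
  show ?thesis
    using xy dy(1,2) dedicated_loss_unsynced[OF y j nsync nz le] nsame
    by (auto simp: dedicated_below_loss_def same_size_def)
qed

lemma dedicated_loss_coupling:
  "\<exists>\<rho>. (\<forall>s\<in>dedicated_below_loss K m' m n. \<rho> s \<ge> 0)
     \<and> stationary (state_space K m' 0) (loss_rate K m' 0 lam (\<lambda>_. M))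
         (\<lambda>x. \<Sum>s\<in>{s\<in>dedicated_below_loss K m' m n. fst s = x}. \<rho> s)
     \<and> stationary (state_space K m n) (loss_rate K m n lam mu)
         (\<lambda>y. \<Sum>s\<in>{s\<in>dedicated_below_loss K m' m n. snd s = y}. \<rho> s)"
proof (rule coupling_exists[where D = "dedicated_loss_sync m' m" and t = "same_size K"])
  show "event_driven (state_space K m' 0) (loss_rate K m' 0 lam (\<lambda>_. M)) (events K) (loss_move K m' 0)
      (loss_event_rate lam (\<lambda>_. M))"
    using lam mu by (intro loss_event_driven) (auto intro: order_trans[of 0 "mu _"])
  show "event_driven (state_space K m n) (loss_rate K m n lam mu) (events K) (loss_move K m n)
      (loss_event_rate lam mu)"
    using lam mu by (intro loss_event_driven) (auto simp: less_imp_le)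
  show "dedicated_below_loss K m' m n \<subseteq> state_space K m' 0 \<times> state_space K m n"
    by (auto simp: dedicated_below_loss_def)
  have "(empty_state, empty_state) \<in> dedicated_below_loss K m' m n"
    using empty_state_in_state_space by (simp add: dedicated_below_loss_def)
  then show "dedicated_below_loss K m' m n \<noteq> {}" by blast
qed (rule finite_state_space dedicated_loss_sync_rate_le dedicated_loss_total_rate_le
    dedicated_loss_step_sync dedicated_loss_step_matched dedicated_loss_step_fst
    dedicated_loss_step_snd; assumption)+

lemma dedicated_size_le_loss:
  assumes p': "stationary (state_space K m' 0) (loss_rate K m' 0 lam (\<lambda>_. M)) p'"
    and p: "stationary (state_space K m n) (loss_rate K m n lam mu) p"
  shows "size_st_le K (state_space K m' 0) p' (state_space K m n) p
    \<and> mean_total K (state_space K m' 0) p' \<le> mean_total K (state_space K m n) p"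
proof -
  obtain \<rho> where \<rho>: "\<forall>s\<in>dedicated_below_loss K m' m n. \<rho> s \<ge> 0"
    "stationary (state_space K m' 0) (loss_rate K m' 0 lam (\<lambda>_. M))
       (\<lambda>x. \<Sum>s\<in>{s\<in>dedicated_below_loss K m' m n. fst s = x}. \<rho> s)"
    "stationary (state_space K m n) (loss_rate K m n lam mu)
       (\<lambda>y. \<Sum>s\<in>{s\<in>dedicated_below_loss K m' m n. snd s = y}. \<rho> s)"
    using dedicated_loss_coupling by blast
  have "\<forall>k<K. M > 0" "\<forall>k<K. mu k > 0" using mu by (auto intro: less_le_trans)
  from loss_stationary_unique[OF lam this(1) p' \<rho>(2)] loss_stationary_unique[OF lam this(2) p \<rho>(3)]
  show ?thesis
    by (intro coupling_size_st_le[OF finite_state_space finite_state_space _ \<rho>(1)])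
      (auto simp: dedicated_below_loss_def)
qed

end

lemma loss_mp_measures:
  assumes lam: "\<forall>k<K. lam k \<ge> 0" and L: "(\<Sum>k<K. lam k) > 0"
    and mu: "\<forall>k<K. \<nu> \<le> mu k \<and> mu k \<le> M" and nu: "\<nu> > 0" "\<nu> \<le> M"
    and p: "stationary (state_space K m n) (loss_rate K m n lam mu) p"
    and pmp: "stationary (state_space K m n) (mp_rate K m n lam (\<lambda>_. \<nu>)) pmp"
  shows "throughput K mu (state_space K m n) p \<le> M / \<nu> * throughput K (\<lambda>_. \<nu>) (state_space K m n) pmp"
    and "1 - M / \<nu> * (1 - blocking K m n lam (state_space K m n) pmp)
      \<le> blocking K m n lam (state_space K m n) p"
proof -
  let ?S = "state_space K m n"
  have "\<forall>x\<in>?S. p x \<ge> 0" using stationary_nonneg[OF p] by blast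
  then have "throughput K mu ?S p \<le> M * mean_total K ?S p"
    using throughput_bounds(2) mu by blast
  also have "\<dots> \<le> M * mean_total K ?S pmp"
    using loss_size_le_mp[OF lam _ nu(1) p pmp] mu nu by (intro mult_left_mono) auto
  also have "\<dots> = M / \<nu> * throughput K (\<lambda>_. \<nu>) ?S pmp"
    using nu by (simp add: throughput_const)
  finally show thr: "throughput K mu ?S p \<le> M / \<nu> * throughput K (\<lambda>_. \<nu>) ?S pmp" .
  have "\<forall>k<K. mu k \<ge> 0" using mu nu by (auto intro: order_trans[of 0 \<nu>])
  from loss_blocking[OF p lam this L] mp_blocking[OF pmp lam _ L] nu
  show "1 - M / \<nu> * (1 - blocking K m n lam ?S pmp) \<le> blocking K m n lam ?S p"
    using divide_right_mono[OF thr, of "\<Sum>k<K. lam k"] L by (simp add: less_imp_le)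
qed

lemma dedicated_loss_measures:
  assumes lam: "\<forall>k<K. lam k \<ge> 0" and L: "(\<Sum>k<K. lam k) > 0"
    and mu: "\<forall>k<K. \<nu> \<le> mu k \<and> mu k \<le> M" and nu: "\<nu> > 0" "\<nu> \<le> M" and m': "m' \<in> C_set K m n"
    and p': "stationary (state_space K m' 0) (loss_rate K m' 0 lam (\<lambda>_. M)) p'"
    and p: "stationary (state_space K m n) (loss_rate K m n lam mu) p"
  shows "throughput K (\<lambda>_. M) (state_space K m' 0) p' / (M / \<nu>) \<le> throughput K mu (state_space K m n) p"
    and "blocking K m n lam (state_space K m n) p
      \<le> 1 - (1 - blocking K m' 0 lam (state_space K m' 0) p') / (M / \<nu>)"
proof -
  let ?S = "state_space K m n" and ?S' = "state_space K m' 0"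
  have mu_pos: "\<forall>k<K. 0 < mu k \<and> mu k \<le> M" using mu nu by (auto intro: less_le_trans)
  have "mean_total K ?S' p' \<le> mean_total K ?S p"
    using dedicated_size_le_loss[OF lam mu_pos m' p' p] by blast
  then have "throughput K (\<lambda>_. M) ?S' p' / (M / \<nu>) \<le> \<nu> * mean_total K ?S p"
    using nu by (simp add: throughput_const)
  also have "\<dots> \<le> throughput K mu ?S p"
    using throughput_bounds(1) stationary_nonneg[OF p] mu by blast
  finally show thr: "throughput K (\<lambda>_. M) ?S' p' / (M / \<nu>) \<le> throughput K mu ?S p" .
  have "\<forall>k<K. mu k \<ge> 0" using mu_pos by (auto simp: less_imp_le)
  from loss_blocking[OF p lam this L] loss_blocking[OF p' lam _ L] nu
  show "blocking K m n lam ?S p \<le> 1 - (1 - blocking K m' 0 lam ?S' p') / (M / \<nu>)"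
    using divide_right_mono[OF thr, of "\<Sum>k<K. lam k"] L
    by (simp add: less_imp_le divide_divide_eq_left mult.commute)
qed

theorem theorem8:
  fixes K n :: nat and m :: "nat \<Rightarrow> nat" and lam mu :: "nat \<Rightarrow> real"
    and p pmp :: "state \<Rightarrow> real"
  assumes K_pos: "K \<ge> 1"
    and lam_pos: "\<forall>k<K. lam k > 0"
    and mu_pos: "\<forall>k<K. mu k > 0"
    and stat: "stationary (state_space K m n) (loss_rate K m n lam mu) p"
    and stat_mp: "stationary (state_space K m n)
                    (mp_rate K m n lam (\<lambda>_. Min (mu ` {..<K}))) pmp"
  shows
   "let mumin = Min (mu ` {..<K}); mumax = Max (mu ` {..<K}); r = mumax / mumin;
        S = state_space K m n
    in
      size_st_le K S p S pmp
    \<and> mean_total K S p \<le> mean_total K S pmp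
    \<and> throughput K mu S p \<le> r * throughput K (\<lambda>_. mumin) S pmp
    \<and> 1 - r * (1 - blocking K m n lam S pmp) \<le> blocking K m n lam S p
    \<and> (\<forall>m'\<in>C_set K m n. \<forall>p'.
          stationary (state_space K m' 0) (loss_rate K m' 0 lam (\<lambda>_. mumax)) p' \<longrightarrow>
            size_st_le K (state_space K m' 0) p' S p
          \<and> mean_total K (state_space K m' 0) p' \<le> mean_total K S p
          \<and> throughput K (\<lambda>_. mumax) (state_space K m' 0) p' / r \<le> throughput K mu S p
          \<and> blocking K m n lam S p
              \<le> 1 - (1 - blocking K m' 0 lam (state_space K m' 0) p') / r)"
proof -
  define \<nu> M where "\<nu> = Min (mu ` {..<K})" and "M = Max (mu ` {..<K})"
  have mus: "finite (mu ` {..<K})" "mu ` {..<K} \<noteq> {}" using K_pos by (auto simp: lessThan_empty_iff)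
  have "\<nu> \<in> mu ` {..<K}" unfolding \<nu>_def using mus by (rule Min_in)
  then have nu: "\<nu> > 0" "\<nu> \<le> M" using mu_pos mus by (auto simp: M_def)
  have mu: "\<forall>k<K. \<nu> \<le> mu k \<and> mu k \<le> M" using mus by (auto simp: \<nu>_def M_def)
  have lam: "\<forall>k<K. lam k \<ge> 0" using lam_pos by (auto simp: less_imp_le)
  have L: "(\<Sum>k<K. lam k) > 0" using lam_pos K_pos by (intro sum_pos) (auto simp: lessThan_empty_iff)
  have mu_lower: "\<forall>k<K. \<nu> \<le> mu k" and mu_upper: "\<forall>k<K. 0 < mu k \<and> mu k \<le> M"
    using mu mu_pos by auto
  show ?thesis
    unfolding Let_def \<nu>_def[symmetric] M_def[symmetric]
    using loss_size_le_mp[OF lam mu_lower nu(1) stat stat_mp[folded \<nu>_def]]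
      loss_mp_measures[OF lam L mu nu stat stat_mp[folded \<nu>_def]]
      dedicated_size_le_loss[OF lam mu_upper _ _ stat] dedicated_loss_measures[OF lam L mu nu _ _ stat]
    by blast
qed

end
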